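(* Let $v^\alpha\mapsto w^\alpha(v^*_*;\varepsilon)$ be a rational Miura transformation such that $w^\alpha(v^*_*;\varepsilon)^{\mathrm{pol}}=v^\alpha$ and $\frac{\partial w^\alpha(v^*_*;\varepsilon)}{\partial v^1}=\delta^{\alpha,1}$ for all $\alpha$. Consider the operator $K=(K^{\alpha\beta})$, $$K^{\alpha\beta}:=\sum_{p,q\ge0}\frac{\partial w^\alpha(v^*_*;\varepsilon)}{\partial v^\mu_p}\partial_x^p\circ\eta^{\mu\nu}\partial_x\circ(-\partial_x)^q\circ\frac{\partial w^\beta(v^*_*;\varepsilon)}{\partial v^\nu_q}=\sum_{i\ge0}K^{\alpha\beta}_i(v^*_*;\varepsilon)\partial_x^i.$$ Suppose that each coefficient $K^{\alpha\beta}_i$, re-expressed in the variables $w$, belongs to $\widehat{\mathcal A}_{w^1,\dots,w^N}$. Then $K^{\alpha\beta}=\eta^{\alpha\beta}\partial_x$.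
   Context: $\eta=(\eta^{\alpha\beta})$ is a nondegenerate symmetric constant matrix; repeated Greek indices summed. $\mathcal A_{v^1,\dots,v^N}$: polynomials in $v^\alpha_k$ ($k>0$) with coefficients in $\mathbb C[[v^1,\dots,v^N]]$, $v^\alpha=v^\alpha_0$, graded by $\deg v^\alpha_k=k$ (degree-$d$ part $\mathcal A^{[d]}$); $\partial_x=\sum v^\alpha_{k+1}\partial/\partial v^\alpha_k$; $\widehat{\mathcal A}=\mathcal A[[\varepsilon]]$, $\deg\varepsilon=-1$. $\mathcal A^{\mathrm{wk}}_v$: formal power series in $v^\alpha_n-\delta^{\alpha,1}\delta_{n,1}$. $\mathcal A^{\mathrm{rt},[d]}_v$: span of expressions $\sum_{i\ge m}\frac{P_i(v^*_* )}{(v^1_x)^i}$ with $m\in\mathbb Z$, $P_i\in\mathcal A^{[d+i]}_v$, $\frac{\partial P_i}{\partial v^1_x}=0$ (viewed in $\mathcal A^{\mathrm{wk}}_v$ via $(v^1_x)^{-i}=\sum_k\binom{-i}{k}(v^1_x-1)^k$); $\mathcal A^{\mathrm{rt}}_v=\bigoplus_d\mathcal A^{\mathrm{rt},[d]}_v$; polynomial part $\big(\sum_{i\ge m}P_i/(v^1_x)^i\big)^{\mathrm{pol}}=\sum_{i=m}^0P_i/(v^1_x)^i$; $\widehat{\mathcal A}^{\mathrm{rt}}_v=\mathcal A^{\mathrm{rt}}_v[[\varepsilon]]$ with the polynomial part taken coefficientwise in $\varepsilon$. Such an expression is tame if there is $C$ with $\partial P_i/\partial v^\alpha_k=0$ for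 all $k>C$ and all $i$; an element of $\widehat{\mathcal A}^{\mathrm{rt}}_v$ is tame if all its $\varepsilon$-coefficients are; $\widehat{\mathcal A}^{\mathrm{rt},\mathrm t,[d]}_v$ denotes tame elements of degree $d$. A rational Miura transformation is a change of variables $v^\alpha\mapsto w^\alpha=v^\alpha+\varepsilon f^\alpha(v^*_*;\varepsilon)$ with $f^\alpha\in\widehat{\mathcal A}^{\mathrm{rt},\mathrm t,[1]}_v$; these form a group and any tame element can be re-expressed as a tame rational function of the new variables $w$. *)

theory Defs
  imports Complex_Main "HOL-Library.Multiset"
begin

text \<open>
The index set {1..N} is a finite type 'i; the distinguished index "1"
(used in v^1, v^1_x) is a parameter e :: 'i.  The jet variable v^alpha_k is the pair (alpha,k).
Elements of A^wk_v are formal power series in the shifted variables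
u^alpha_k = v^alpha_k - delta(alpha,e) delta(k,1), represented by their coefficient
function on monomials (finite multisets of variables).  Elements of A^wk_v[[eps]]
are sequences of such (the n-th entry is the coefficient of eps^n).
Differential operators sum_i c_i d_x^i are sequences of coefficients c_i.
\<close>

type_synonym 'i mono = "('i \<times> nat) multiset"
type_synonym 'i ser = "'i mono \<Rightarrow> complex"
type_synonym 'i eser = "nat \<Rightarrow> 'i ser"
type_synonym 'i dop = "nat \<Rightarrow> 'i eser"

text \<open>coefficientwise (locally finite) infinite sum\<close>
definition lsum :: "('j \<Rightarrow> 'i ser) \<Rightarrow> 'i ser" where
  "lsum F = (\<lambda>m. \<Sum>j\<in>{j. F j m \<noteq> 0}. F j m)"

definition ser_zero :: "'i ser" where "ser_zero = (\<lambda>m. 0)"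
definition ser_one :: "'i ser" where "ser_one = (\<lambda>m. if m = {#} then 1 else 0)"
definition ser_mult :: "'i ser \<Rightarrow> 'i ser \<Rightarrow> 'i ser" where
  "ser_mult f g = (\<lambda>m. \<Sum>a\<in>{a. a \<subseteq># m}. f a * g (m - a))"
definition ser_uvar :: "'i \<times> nat \<Rightarrow> 'i ser" where
  "ser_uvar x = (\<lambda>m. if m = {#x#} then 1 else 0)"
text \<open>the variable v^alpha_k, as an element of A^wk\<close>
definition ser_var :: "'i \<Rightarrow> 'i \<times> nat \<Rightarrow> 'i ser" where
  "ser_var e x = (\<lambda>m. ser_uvar x m + (if x = (e,1) then ser_one m else 0))"
text \<open>partial derivative d/dv^alpha_k (= d/du^alpha_k)\<close>
definition ser_deriv :: "'i \<times> nat \<Rightarrow> 'i ser \<Rightarrow> 'i ser" where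
  "ser_deriv x f = (\<lambda>m. of_nat (count m x + 1) * f (add_mset x m))"
text \<open>d_x = sum v^alpha_{k+1} d/dv^alpha_k = sum u^alpha_{k+1} d/du^alpha_k + d/du^e_0\<close>
definition ser_dx :: "'i \<Rightarrow> 'i ser \<Rightarrow> 'i ser" where
  "ser_dx e f = (\<lambda>m. (\<Sum>x\<in>{x. x \<in># m \<and> snd x \<ge> 1}.
        ser_deriv (fst x, snd x - 1) f (m - {#x#})) + ser_deriv (e,0) f m)"
definition weight :: "'i mono \<Rightarrow> nat" where
  "weight m = sum_mset (image_mset snd m)"
text \<open>(v^1_x)^(-i) = sum_k binom(-i,k) (v^1_x - 1)^k\<close>
definition vxpow :: "'i \<Rightarrow> int \<Rightarrow> 'i ser" where
  "vxpow e i = (\<lambda>m. if set_mset m \<subseteq> {(e,1)} then (of_int (-i) :: complex) gchoose (size m) else 0)"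

text \<open>P in A^[d] with dP/dv^1_x = 0 (for such P the u- and v-coordinates agree)\<close>
definition Apol_vxfree :: "'i \<Rightarrow> int \<Rightarrow> 'i ser \<Rightarrow> bool" where
  "Apol_vxfree e d P \<longleftrightarrow> ser_deriv (e,1) P = ser_zero
     \<and> finite {filter_mset (\<lambda>x. snd x > 0) m | m. P m \<noteq> 0}
     \<and> (\<forall>m. P m \<noteq> 0 \<longrightarrow> int (weight m) = d)"

text \<open>f = sum_{i>=m} P_i/(v^1_x)^i, an element of A^{rt,[d]}\<close>
definition rat_rep :: "'i \<Rightarrow> int \<Rightarrow> 'i ser \<Rightarrow> int \<Rightarrow> (int \<Rightarrow> 'i ser) \<Rightarrow> bool" where
  "rat_rep e d f m P \<longleftrightarrow> (\<forall>i. Apol_vxfree e (d + i) (P i)) \<and> (\<forall>i<m. P i = ser_zero)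
     \<and> f = lsum (\<lambda>i. ser_mult (P i) (vxpow e i))"
definition tame_rep :: "(int \<Rightarrow> 'i ser) \<Rightarrow> bool" where
  "tame_rep P \<longleftrightarrow> (\<exists>C. \<forall>i \<alpha> k. k > C \<longrightarrow> ser_deriv (\<alpha>,k) (P i) = ser_zero)"
definition rat_tame :: "'i \<Rightarrow> int \<Rightarrow> 'i ser \<Rightarrow> bool" where
  "rat_tame e d f \<longleftrightarrow> (\<exists>m P. rat_rep e d f m P \<and> tame_rep P)"
definition polpart :: "'i \<Rightarrow> int \<Rightarrow> 'i ser \<Rightarrow> 'i ser" where
  "polpart e d f = (THE g. \<exists>m P. rat_rep e d f m P
      \<and> g = (\<lambda>mo. \<Sum>i\<in>{m..0}. ser_mult (P i) (vxpow e i) mo))"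

definition ezero :: "'i eser" where "ezero = (\<lambda>n m. 0)"
definition eone :: "'i eser" where "eone = (\<lambda>n. if n = 0 then ser_one else ser_zero)"
definition econst :: "complex \<Rightarrow> 'i eser" where
  "econst c = (\<lambda>n m. if n = 0 \<and> m = {#} then c else 0)"
definition escale :: "complex \<Rightarrow> 'i eser \<Rightarrow> 'i eser" where
  "escale c F = (\<lambda>n m. c * F n m)"
definition emult :: "'i eser \<Rightarrow> 'i eser \<Rightarrow> 'i eser" where
  "emult F G = (\<lambda>n m. \<Sum>j\<le>n. ser_mult (F j) (G (n - j)) m)"
definition edx :: "'i \<Rightarrow> 'i eser \<Rightarrow> 'i eser" where
  "edx e F = (\<lambda>n. ser_dx e (F n))"
definition ederiv :: "'i \<times> nat \<Rightarrow> 'i eser \<Rightarrow> 'i eser" where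
  "ederiv x F = (\<lambda>n. ser_deriv x (F n))"

text \<open>differential operators (finite order) and their composition (Leibniz rule)\<close>
definition dop_comp :: "'i \<Rightarrow> 'i dop \<Rightarrow> 'i dop \<Rightarrow> 'i dop" where
  "dop_comp e A B = (\<lambda>i n m. \<Sum>j\<in>{j. A j \<noteq> ezero}. \<Sum>l\<in>{..min j i}.
      of_nat (j choose l) * emult (A j) ((edx e ^^ (j - l)) (B (i - l))) n m)"
definition dop_mul :: "'i eser \<Rightarrow> 'i dop" where
  "dop_mul a = (\<lambda>i. if i = 0 then a else ezero)"
definition dop_D :: "'i dop" where
  "dop_D = (\<lambda>i. if i = 1 then eone else ezero)"
definition dop_scale :: "complex \<Rightarrow> 'i dop \<Rightarrow> 'i dop" where
  "dop_scale c A = (\<lambda>i. escale c (A i))"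
definition dop_pow :: "'i \<Rightarrow> 'i dop \<Rightarrow> nat \<Rightarrow> 'i dop" where
  "dop_pow e A p = (dop_comp e A ^^ p) (dop_mul eone)"

definition Ksummand :: "'i \<Rightarrow> ('i \<Rightarrow> 'i \<Rightarrow> complex) \<Rightarrow> ('i \<Rightarrow> 'i eser) \<Rightarrow> 'i \<Rightarrow> 'i
     \<Rightarrow> nat \<times> nat \<times> 'i \<times> 'i \<Rightarrow> 'i dop" where
  "Ksummand e \<eta> w \<alpha> \<beta> t = (case t of (p, q, \<mu>, \<nu>) \<Rightarrow>
     dop_comp e (dop_comp e (dop_comp e (dop_comp e
        (dop_mul (ederiv (\<mu>, p) (w \<alpha>))) (dop_pow e dop_D p))
        (dop_scale (\<eta> \<mu> \<nu>) dop_D))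
        (dop_pow e (dop_scale (-1) dop_D) q))
        (dop_mul (ederiv (\<nu>, q) (w \<beta>))))"

text \<open>K^{alpha beta} = sum_i K_i d_x^i (sum over p,q,mu,nu, eps-adically locally finite)\<close>
definition Kop :: "'i \<Rightarrow> ('i \<Rightarrow> 'i \<Rightarrow> complex) \<Rightarrow> ('i \<Rightarrow> 'i eser) \<Rightarrow> 'i \<Rightarrow> 'i \<Rightarrow> 'i dop" where
  "Kop e \<eta> w \<alpha> \<beta> = (\<lambda>i n. lsum (\<lambda>t. Ksummand e \<eta> w \<alpha> \<beta> t i n))"

text \<open>rational Miura transformation w^alpha = v^alpha + eps f^alpha, f^alpha tame rational of degree 1;
  the eps^n-coefficient (n>=1) of w^alpha is f^alpha_{n-1}, of degree n\<close>
definition rational_miura :: "'i \<Rightarrow> ('i \<Rightarrow> 'i eser) \<Rightarrow> bool" where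
  "rational_miura e w \<longleftrightarrow> (\<forall>\<alpha>. w \<alpha> 0 = ser_var e (\<alpha>, 0))
     \<and> (\<forall>\<alpha> n. n \<ge> 1 \<longrightarrow> rat_tame e (int n) (w \<alpha> n))"

text \<open>re-expression in the variables w: substitution w^alpha_k := d_x^k w^alpha(v;eps)\<close>
definition emprod :: "'i \<Rightarrow> ('i \<Rightarrow> 'i eser) \<Rightarrow> ('i \<times> nat) list \<Rightarrow> 'i eser" where
  "emprod e w xs = foldr (\<lambda>x acc. emult ((edx e ^^ snd x) (w (fst x))) acc) xs eone"
definition emono :: "'i \<Rightarrow> ('i \<Rightarrow> 'i eser) \<Rightarrow> 'i mono \<Rightarrow> 'i eser" where
  "emono e w \<mu> = emprod e w (SOME xs. mset xs = \<mu>)"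
text \<open>G in hat-A_w: eps-coefficients polynomial in w^alpha_k (k>0), power series in w^alpha_0\<close>
definition in_Ahat :: "'i eser \<Rightarrow> bool" where
  "in_Ahat G \<longleftrightarrow> (\<forall>n. finite {filter_mset (\<lambda>x. snd x > 0) \<mu> | \<mu>. G n \<mu> \<noteq> 0})"
definition subst_terms :: "'i \<Rightarrow> ('i \<Rightarrow> 'i eser) \<Rightarrow> 'i eser \<Rightarrow> nat \<Rightarrow> 'i mono \<Rightarrow> (nat \<times> 'i mono) set" where
  "subst_terms e w G n m = {(j, \<mu>). j \<le> n \<and> G j \<mu> * emono e w \<mu> (n - j) m \<noteq> 0}"
definition expressible_in_w :: "'i \<Rightarrow> ('i \<Rightarrow> 'i eser) \<Rightarrow> 'i eser \<Rightarrow> bool" where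
  "expressible_in_w e w K \<longleftrightarrow> (\<exists>G. in_Ahat G
     \<and> (\<forall>n m. finite (subst_terms e w G n m))
     \<and> K = (\<lambda>n m. \<Sum>(j, \<mu>)\<in>subst_terms e w G n m. G j \<mu> * emono e w \<mu> (n - j) m))"

end

theory Submission
  imports Defs "HOL-Computational_Algebra.Formal_Power_Series"
begin

(* At order eps^0 the transformation is the identity, so there K reduces to eta d_x.
   For n >= 1 the eps^n-coefficient of every w^alpha has vanishing polynomial part and does
   not depend on v^1; along every line in the v^1_x-direction it is therefore a combination of
   strictly negative powers of v^1_x.  This property survives products, partial derivatives
   and d_x, so it holds for the eps^n-coefficients of all K_i.  If K_i is moreover a power
   series in the w's, induction on n shows that along the same lines its eps^n-coefficient is
   a polynomial in v^1_x.  A polynomial that is a combination of negative powers vanishes. *)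

unbundle fps_syntax

lemma finite_submultisets: "finite {a. a \<subseteq># (m::'a multiset)}"
proof -
  have "{a. a \<subseteq># m} \<subseteq> (\<Union>k\<in>{..size m}. multisets_of_size (set_mset m) k)"
    by (auto simp: multisets_of_size_def dest: set_mset_mono size_mset_mono)
  thus ?thesis by (rule finite_subset) auto
qed

lemma sum_submultisets_single:
  fixes g :: "'a multiset \<Rightarrow> 'b::comm_monoid_add"
  assumes "\<And>a. a \<subseteq># m \<Longrightarrow> a \<noteq> b \<Longrightarrow> g a = 0" and "b \<subseteq># m"
  shows "(\<Sum>a\<in>{a. a \<subseteq># m}. g a) = g b"
proof -
  have "(\<Sum>a\<in>{a. a \<subseteq># m}. g a) = (\<Sum>a\<in>{a. a \<subseteq># m}. if a = b then g a else 0)"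
    by (rule sum.cong) (auto simp: assms)
  also have "\<dots> = g b" using assms(2) by (simp add: sum.delta[OF finite_submultisets])
  finally show ?thesis .
qed

lemma lsum_eq_sum:
  assumes "finite T" and "\<And>j. j \<notin> T \<Longrightarrow> F j m = 0"
  shows "lsum F m = (\<Sum>j\<in>T. F j m)"
  unfolding lsum_def using assms by (intro sum.mono_neutral_left) auto

definition ser_const :: "'i ser \<Rightarrow> bool" where
  "ser_const f \<longleftrightarrow> (\<forall>m. m \<noteq> {#} \<longrightarrow> f m = 0)"

lemma ser_const_one: "ser_const ser_one"
  by (simp add: ser_const_def ser_one_def)

lemma ser_const_zero: "ser_const ser_zero"
  by (simp add: ser_const_def ser_zero_def)

lemma ser_const_scale: "ser_const f \<Longrightarrow> ser_const (\<lambda>m. c * f m)"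
  by (simp add: ser_const_def)

lemma ser_const_sum: "(\<And>x. x \<in> A \<Longrightarrow> ser_const (F x)) \<Longrightarrow> ser_const (\<lambda>m. \<Sum>x\<in>A. F x m)"
  by (simp add: ser_const_def)

lemma ser_mult_const_left: "ser_const f \<Longrightarrow> ser_mult f h = (\<lambda>m. f {#} * h m)"
  unfolding ser_mult_def
  by (rule ext, subst sum_submultisets_single[where b = "{#}"]) (auto simp: ser_const_def)

lemma ser_mult_const_right: "ser_const f \<Longrightarrow> ser_mult h f = (\<lambda>m. f {#} * h m)"
  unfolding ser_mult_def
  by (rule ext, subst sum_submultisets_single[where b = m for m])
     (auto simp: ser_const_def, metis subset_mset.add_diff_inverse add.right_neutral)

lemma ser_const_mult: "ser_const f \<Longrightarrow> ser_const g \<Longrightarrow> ser_const (ser_mult f g)"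
  by (simp add: ser_mult_const_left ser_const_scale)

lemma ser_deriv_const: "ser_const f \<Longrightarrow> ser_deriv x f = ser_zero"
  by (rule ext) (simp add: ser_deriv_def ser_const_def ser_zero_def)

lemma ser_dx_const: "ser_const f \<Longrightarrow> ser_dx e f = ser_zero"
  by (rule ext) (simp add: ser_dx_def ser_deriv_const ser_zero_def)

lemma ser_dx_zero: "ser_dx e ser_zero = ser_zero"
  by (simp add: ser_dx_const ser_const_zero)

lemma ser_dx_pow_const: "ser_const g \<Longrightarrow> 0 < k \<Longrightarrow> (ser_dx e ^^ k) g = ser_zero"
proof (induction k)
  case (Suc k) then show ?case by (cases k) (simp_all add: ser_dx_const ser_dx_zero)
qed simp

lemma ser_deriv_zero_vanishes:
  assumes "ser_deriv x P = ser_zero" and "x \<in># a"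
  shows "P a = 0"
proof -
  have "ser_deriv x P (a - {#x#}) = 0" using assms(1) by (simp add: ser_zero_def)
  then have "of_nat (count (a - {#x#}) x + 1) * P a = 0"
    by (simp only: ser_deriv_def insert_DiffM[OF assms(2)])
  then show ?thesis by (simp only: mult_eq_0_iff of_nat_eq_0_iff) simp
qed

lemma ser_deriv_var: "ser_deriv x (ser_var e y) m = (if m = {#} \<and> x = y then 1 else 0)"
  by (auto simp: ser_deriv_def ser_var_def ser_uvar_def ser_one_def)

lemma ser_mult_var:
  "ser_mult (ser_var e x) F m = (if x \<in># m then F (m - {#x#}) else 0) + (if x = (e,1) then F m else 0)"
proof -
  have uvar: "ser_mult (ser_uvar x) F m = (if x \<in># m then F (m - {#x#}) else 0)"
  proof (cases "x \<in># m")
    case True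
    then show ?thesis unfolding ser_mult_def
      by (subst sum_submultisets_single[where b = "{#x#}"]) (auto simp: ser_uvar_def)
  qed (auto simp: ser_mult_def ser_uvar_def intro!: sum.neutral)
  have "ser_mult (ser_var e x) F m
      = ser_mult (ser_uvar x) F m + (if x = (e,1) then ser_mult ser_one F m else 0)"
    by (simp add: ser_mult_def ser_var_def distrib_right sum.distrib)
  moreover have "ser_mult ser_one F m = F m"
    by (simp add: ser_mult_const_left[OF ser_const_one]) (simp add: ser_one_def)
  ultimately show ?thesis by (simp add: uvar)
qed

lemma ser_dx_var: "ser_dx e (ser_var e (\<alpha>, k)) = ser_var e (\<alpha>, Suc k)"
proof (rule ext)
  fix m :: "'a mono"
  let ?S = "{x. x \<in># m \<and> 1 \<le> snd x}"
  let ?x0 = "(\<alpha>, Suc k)"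
  have summand: "ser_deriv (fst x, snd x - 1) (ser_var e (\<alpha>, k)) (m - {#x#})
      = (if x = ?x0 then (if m = {#?x0#} then 1 else 0) else 0)" if x: "x \<in> ?S" for x
  proof -
    have "m - {#x#} = {#} \<longleftrightarrow> m = {#x#}" using x
      by (metis (mono_tags, lifting) diff_single_eq_union diff_empty mem_Collect_eq add_mset_diff_bothsides)
    then show ?thesis using x by (cases x) (auto simp: ser_deriv_var)
  qed
  have fin: "finite ?S" by (rule finite_subset[of _ "set_mset m"]) auto
  have "(\<Sum>x\<in>?S. ser_deriv (fst x, snd x - 1) (ser_var e (\<alpha>, k)) (m - {#x#}))
      = (\<Sum>x\<in>?S. if x = ?x0 then (if m = {#?x0#} then 1 else 0) else 0)"
    by (rule sum.cong[OF refl]) (rule summand)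
  also have "\<dots> = (if m = {#?x0#} then 1 else 0)"
    using sum.delta'[OF fin, of ?x0 "\<lambda>_. if m = {#?x0#} then 1 else (0::complex)"] by auto
  finally have "(\<Sum>x\<in>?S. ser_deriv (fst x, snd x - 1) (ser_var e (\<alpha>, k)) (m - {#x#}))
      = (if m = {#?x0#} then 1 else 0)" .
  then have "ser_dx e (ser_var e (\<alpha>, k)) m
      = (if m = {#?x0#} then 1 else 0) + (if m = {#} \<and> (e,0) = (\<alpha>, k) then 1 else 0)"
    by (simp only: ser_dx_def ser_deriv_var)
  then show "ser_dx e (ser_var e (\<alpha>, k)) m = ser_var e (\<alpha>, Suc k) m"
    by (auto simp: ser_var_def ser_uvar_def ser_one_def)
qed


subsection \<open>Lines in the \<open>v\<^sup>1\<^sub>x\<close>-direction\<close>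

text \<open>Fixing the exponents of all variables but \<open>u\<^sup>1\<^sub>1 = v\<^sup>1\<^sub>x - 1\<close> turns a series into a power
  series in \<open>u\<^sup>1\<^sub>1\<close>; in it, \<open>(1 + fps_X)\<close> plays the role of \<open>v\<^sup>1\<^sub>x\<close>.\<close>

abbreviation vx_mono :: "'i \<Rightarrow> nat \<Rightarrow> 'i mono" where
  "vx_mono e k \<equiv> replicate_mset k (e,1)"

definition vx_slice :: "'i \<Rightarrow> 'i ser \<Rightarrow> 'i mono \<Rightarrow> complex fps" where
  "vx_slice e f r = Abs_fps (\<lambda>k. f (r + vx_mono e k))"

lemma vx_slice_nth [simp]: "vx_slice e f r $ k = f (r + vx_mono e k)"
  by (simp add: vx_slice_def)

lemma vx_slice_scale: "vx_slice e (\<lambda>m. c * f m) r = fps_const c * vx_slice e f r"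
  by (simp add: fps_eq_iff)

lemma vx_slice_sum: "vx_slice e (\<lambda>m. \<Sum>x\<in>A. F x m) r = (\<Sum>x\<in>A. vx_slice e (F x) r)"
  by (simp add: fps_eq_iff fps_sum_nth)

lemma mono_split_vx: "m = filter_mset (\<lambda>y. y \<noteq> (e,1)) m + vx_mono e (count m (e,1))"
  by (auto simp: multiset_eq_iff)

lemma filter_vx_line:
  "(e,1) \<notin># r \<Longrightarrow> filter_mset (\<lambda>y. y \<noteq> (e,1)) (r + vx_mono e c) = r"
  by (auto simp: multiset_eq_iff not_in_iff)

lemma subset_vx_line_vx_free:
  assumes "a \<subseteq># r + vx_mono e k" and "(e,1) \<notin># a"
  shows "a \<subseteq># r"
  unfolding subseteq_mset_def
proof
  fix x
  have "count a x \<le> count (r + vx_mono e k) x" using mset_subset_eq_count[OF assms(1)] .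
  then show "count a x \<le> count r x" using assms(2) by (cases "x = (e,1)") (auto simp: not_in_iff)
qed

lemma vx_slice_ser_mult:
  assumes r: "(e,1) \<notin># r"
  shows "vx_slice e (ser_mult f h) r
    = (\<Sum>r1\<in>{r1. r1 \<subseteq># r}. vx_slice e f r1 * vx_slice e h (r - r1))"
proof (rule fps_ext)
  fix k :: nat
  let ?S = "Sigma {r1. r1 \<subseteq># r} (\<lambda>_. {0..k})"
  let ?line = "\<lambda>p. fst p + vx_mono e (snd p)"
  have "(\<Sum>r1\<in>{r1. r1 \<subseteq># r}. vx_slice e f r1 * vx_slice e h (r - r1)) $ k
      = (\<Sum>r1\<in>{r1. r1 \<subseteq># r}. \<Sum>j\<in>{0..k}. f (r1 + vx_mono e j) * h (r - r1 + vx_mono e (k - j)))"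
    by (simp add: fps_sum_nth fps_mult_nth)
  also have "\<dots> = (\<Sum>p\<in>?S. f (?line p) * h (r - fst p + vx_mono e (k - snd p)))"
    by (subst sum.Sigma) (auto simp: finite_submultisets case_prod_beta)
  also have "\<dots> = (\<Sum>a\<in>{a. a \<subseteq># r + vx_mono e k}. f a * h (r + vx_mono e k - a))"
  proof (rule sum.reindex_bij_witness[where j = ?line
        and i = "\<lambda>a. (filter_mset (\<lambda>y. y \<noteq> (e,1)) a, count a (e,1))"])
    fix p assume p: "p \<in> ?S"
    then have "(e,1) \<notin># fst p" using r by (auto dest: mset_subset_eqD)
    then show "(filter_mset (\<lambda>y. y \<noteq> (e,1)) (?line p), count (?line p) (e,1)) = p"
      by (cases p) (auto simp: multiset_eq_iff not_in_iff)
    show "?line p \<in> {a. a \<subseteq># r + vx_mono e k}"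
      using p by (auto intro!: subset_mset.add_mono simp: replicate_mset_msubseteq_iff)
    have "r + vx_mono e k - ?line p = (r - fst p) + vx_mono e (k - snd p)"
      using p by (auto simp: multiset_eq_iff subseteq_mset_def)
    then show "f (?line p) * h (r + vx_mono e k - ?line p)
        = f (?line p) * h (r - fst p + vx_mono e (k - snd p))" by (simp only:)
  next
    fix a assume a: "a \<in> {a. a \<subseteq># r + vx_mono e k}"
    then show "?line (filter_mset (\<lambda>y. y \<noteq> (e,1)) a, count a (e,1)) = a"
      by (simp only: fst_conv snd_conv mono_split_vx[of a e, symmetric])
    have "filter_mset (\<lambda>y. y \<noteq> (e,1)) a \<subseteq># r"
    proof (rule subset_vx_line_vx_free[where k = k])
      show "filter_mset (\<lambda>y. y \<noteq> (e,1)) a \<subseteq># r + vx_mono e k"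
        using a multiset_filter_subset subset_mset.order_trans by blast
    qed simp
    moreover have "count a (e,1) \<le> k"
      using mset_subset_eq_count[OF a[simplified], of "(e,1)"] r by (simp add: not_in_iff)
    ultimately show "(filter_mset (\<lambda>y. y \<noteq> (e,1)) a, count a (e,1)) \<in> ?S"
      by auto
  qed
  finally show "vx_slice e (ser_mult f h) r $ k
      = (\<Sum>r1\<in>{r1. r1 \<subseteq># r}. vx_slice e f r1 * vx_slice e h (r - r1)) $ k"
    by (simp add: ser_mult_def)
qed


subsection \<open>Formal power series that are combinations of negative powers of \<open>1 + X\<close>\<close>

definition fps_deg_below :: "'a::zero fps \<Rightarrow> nat \<Rightarrow> bool" where
  "fps_deg_below p M \<longleftrightarrow> (\<forall>j\<ge>M. p $ j = 0)"

text \<open>\<open>neg_powers_at s M\<close> says that \<open>s\<close> lies in the span of \<open>(1 + X)\<^sup>-\<^sup>k\<close>, \<open>1 \<le> k \<le> M\<close>.\<close>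

definition neg_powers_at :: "'a::comm_ring_1 fps \<Rightarrow> nat \<Rightarrow> bool" where
  "neg_powers_at s M \<longleftrightarrow> fps_deg_below (s * (1 + fps_X) ^ M) M"

definition neg_powers :: "'a::comm_ring_1 fps \<Rightarrow> bool" where
  "neg_powers s \<longleftrightarrow> (\<exists>M. neg_powers_at s M)"

lemma one_plus_X_power_nth: "((1 + fps_X) ^ n :: 'a::field_char_0 fps) $ k = of_nat (n choose k)"
  by (simp add: fps_binomial_of_nat[symmetric] binomial_gbinomial)

lemma fps_deg_below_mult:
  fixes p q :: "'a::comm_semiring_0 fps"
  assumes "fps_deg_below p a" "fps_deg_below q b" "1 \<le> a" "1 \<le> b"
  shows "fps_deg_below (p * q) (a + b - 1)"
  unfolding fps_deg_below_def
proof (intro allI impI)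
  fix j assume j: "a + b - 1 \<le> j"
  have zero: "p $ i * q $ (j - i) = 0" if "i \<in> {0..j}" for i
  proof (cases "a \<le> i")
    case False then have "b \<le> j - i" using j that by auto
    then show ?thesis using assms(2) by (simp add: fps_deg_below_def)
  qed (use assms(1) in \<open>simp add: fps_deg_below_def\<close>)
  show "(p * q) $ j = 0" unfolding fps_mult_nth by (rule sum.neutral) (use zero in blast)
qed

lemma fps_deg_below_mono: "fps_deg_below p a \<Longrightarrow> a \<le> b \<Longrightarrow> fps_deg_below p b"
  by (simp add: fps_deg_below_def)

lemma fps_deg_below_one_plus_X: "fps_deg_below (1 + fps_X :: 'a::comm_ring_1 fps) 2"
  by (simp add: fps_deg_below_def fps_X_def)

lemma neg_powers_at_0: "neg_powers_at s 0 \<Longrightarrow> s = 0"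
  by (simp add: neg_powers_at_def fps_deg_below_def fps_eq_iff)

lemma neg_powers_at_Suc:
  fixes s :: "'a::comm_ring_1 fps"
  assumes "neg_powers_at s M" shows "neg_powers_at s (Suc M)"
proof (cases "M = 0")
  case True
  then have "s = 0" using assms neg_powers_at_0 by blast
  then show ?thesis by (simp add: neg_powers_at_def fps_deg_below_def)
next
  case False
  have "fps_deg_below ((s * (1 + fps_X) ^ M) * (1 + fps_X)) (M + 2 - 1)"
    using assms False fps_deg_below_one_plus_X
    by (intro fps_deg_below_mult) (auto simp: neg_powers_at_def)
  then show ?thesis by (simp add: neg_powers_at_def mult.assoc power_Suc2 del: power_Suc)
qed

lemma neg_powers_at_mono: "neg_powers_at s M \<Longrightarrow> M \<le> M' \<Longrightarrow> neg_powers_at s M'"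
proof (induction M')
  case (Suc M') then show ?case by (cases "M \<le> M'") (auto intro: neg_powers_at_Suc simp: le_Suc_eq)
qed simp

lemma neg_powersD: "neg_powers s \<Longrightarrow> \<exists>M0. \<forall>M\<ge>M0. neg_powers_at s M"
  unfolding neg_powers_def using neg_powers_at_mono by blast

lemma neg_powers_zero: "neg_powers 0"
  by (auto simp: neg_powers_def neg_powers_at_def fps_deg_below_def)

lemma neg_powers_add: assumes "neg_powers s" "neg_powers t" shows "neg_powers (s + t)"
proof -
  obtain M1 M2 where "\<forall>M\<ge>M1. neg_powers_at s M" "\<forall>M\<ge>M2. neg_powers_at t M"
    using assms neg_powersD by metis
  then have "neg_powers_at (s + t) (max M1 M2)"
    by (simp add: neg_powers_at_def distrib_right fps_deg_below_def)
  then show ?thesis by (auto simp: neg_powers_def)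
qed

lemma neg_powers_const_mult: assumes "neg_powers s" shows "neg_powers (fps_const c * s)"
proof -
  obtain M where "neg_powers_at s M" using assms by (auto simp: neg_powers_def)
  then have "neg_powers_at (fps_const c * s) M"
    by (simp add: neg_powers_at_def fps_deg_below_def mult.assoc)
  then show ?thesis by (auto simp: neg_powers_def)
qed

lemma neg_powers_sum: "(\<And>x. x \<in> A \<Longrightarrow> neg_powers (f x)) \<Longrightarrow> neg_powers (\<Sum>x\<in>A. f x)"
  by (induction A rule: infinite_finite_induct) (simp_all add: neg_powers_zero neg_powers_add)

lemma neg_powers_mult: assumes "neg_powers s" "neg_powers t" shows "neg_powers (s * t)"
proof -
  obtain M1 M2 where "\<forall>M\<ge>M1. neg_powers_at s M" "\<forall>M\<ge>M2. neg_powers_at t M"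
    using assms neg_powersD by metis
  then have "neg_powers_at s (M1 + 1)" "neg_powers_at t (M2 + 1)" by auto
  then have "fps_deg_below ((s * (1 + fps_X) ^ (M1 + 1)) * (t * (1 + fps_X) ^ (M2 + 1)))
      (M1 + 1 + (M2 + 1) - 1)"
    by (intro fps_deg_below_mult) (auto simp: neg_powers_at_def)
  moreover have "(s * (1 + fps_X) ^ (M1 + 1)) * (t * (1 + fps_X) ^ (M2 + 1))
      = (s * t) * (1 + fps_X) ^ (M1 + 1 + (M2 + 1))"
    by (simp add: power_add algebra_simps)
  ultimately have "neg_powers_at (s * t) (M1 + 1 + (M2 + 1))"
    unfolding neg_powers_at_def by (metis fps_deg_below_mono diff_le_self)
  then show ?thesis unfolding neg_powers_def by blast
qed

lemma neg_powers_deriv: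
  fixes s :: "'a::comm_ring_1 fps"
  assumes "neg_powers s" shows "neg_powers (fps_deriv s)"
proof -
  obtain M0 where "\<forall>M\<ge>M0. neg_powers_at s M" using neg_powersD[OF assms] by blast
  define K where "K = Suc M0"
  then have "neg_powers_at s (Suc K)" and "1 \<le> K"
    using \<open>\<forall>M\<ge>M0. neg_powers_at s M\<close> by auto
  define p where "p = s * (1 + fps_X) ^ Suc K"
  have p: "fps_deg_below p (Suc K)" using \<open>neg_powers_at s (Suc K)\<close>
    by (simp add: neg_powers_at_def p_def)
  have dp: "fps_deg_below (fps_deriv p) K" using p by (simp add: fps_deg_below_def)
  have "fps_deriv ((1 + fps_X :: 'a fps) ^ Suc K) = fps_const (of_nat (Suc K)) * (1 + fps_X) ^ K"
    by (subst fps_deriv_power) simp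
  then have deriv_p: "fps_deriv p = fps_deriv s * (1 + fps_X) ^ Suc K + fps_const (of_nat (Suc K)) * s * (1 + fps_X) ^ K"
    unfolding p_def fps_deriv_mult by (simp only:) (simp add: algebra_simps)
  have eq: "fps_deriv s * (1 + fps_X) ^ Suc (Suc K)
      = fps_deriv p * (1 + fps_X) - fps_const (of_nat (Suc K)) * p"
    unfolding deriv_p by (simp add: p_def algebra_simps)
  have "fps_deg_below (fps_deriv p * (1 + fps_X)) (K + 2 - 1)"
    using dp fps_deg_below_one_plus_X \<open>1 \<le> K\<close> by (intro fps_deg_below_mult) auto
  then have "fps_deg_below (fps_deriv p * (1 + fps_X)) (Suc (Suc K))"
    by (rule fps_deg_below_mono) auto
  moreover have "fps_deg_below (fps_const (of_nat (Suc K)) * p) (Suc (Suc K))"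
    using p by (simp add: fps_deg_below_def)
  ultimately have "neg_powers_at (fps_deriv s) (Suc (Suc K))"
    unfolding neg_powers_at_def eq by (simp add: fps_deg_below_def)
  then show ?thesis by (auto simp: neg_powers_def)
qed

lemma neg_powers_binomial:
  fixes c :: "'a::field_char_0"
  assumes "1 \<le> M" shows "neg_powers (fps_const c * fps_binomial (- of_nat M))"
proof -
  have "fps_const c * fps_binomial (- of_nat M) * (1 + fps_X) ^ M
      = fps_const c * (fps_binomial (- of_nat M) * fps_binomial (of_nat M))"
    by (simp add: fps_binomial_of_nat mult.assoc)
  also have "\<dots> = fps_const c" by (simp flip: fps_binomial_add_mult)
  finally have eq: "fps_const c * fps_binomial (- of_nat M) * (1 + fps_X) ^ M = fps_const c" .
  have "neg_powers_at (fps_const c * fps_binomial (- of_nat M)) M"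
    unfolding neg_powers_at_def eq fps_deg_below_def using assms by simp
  then show ?thesis by (auto simp: neg_powers_def)
qed

text \<open>For \<open>b = 0\<close>: a polynomial in \<open>1 + X\<close> that is a combination of negative powers of \<open>1 + X\<close>
  vanishes.\<close>

lemma one_plus_X_combination_coeff_eq_0:
  fixes g :: "nat \<Rightarrow> 'a::field_char_0"
  assumes C: "finite C"
    and deg: "fps_deg_below ((\<Sum>c\<in>C. fps_const (g c) * (1 + fps_X) ^ c) * (1 + fps_X) ^ M) (M + b)"
    and c: "c \<in> C" "b \<le> c"
  shows "g c = 0"
proof (rule ccontr)
  assume nz: "g c \<noteq> 0"
  define C' where "C' = {c\<in>C. b \<le> c \<and> g c \<noteq> 0}"
  have C': "finite C'" "C' \<noteq> {}" using C c nz by (auto simp: C'_def)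
  define cm where "cm = Max C'"
  have cm: "cm \<in> C'" using C' by (simp add: cm_def)
  have cm_max: "c' \<le> cm" if "c' \<in> C'" for c' using C' that by (simp add: cm_def)
  have "((\<Sum>c\<in>C. fps_const (g c) * (1 + fps_X) ^ c) * (1 + fps_X) ^ M) $ (cm + M)
      = (\<Sum>c\<in>C. g c * of_nat ((c + M) choose (cm + M)))"
    by (simp add: sum_distrib_right fps_sum_nth mult.assoc power_add[symmetric] one_plus_X_power_nth)
  also have "\<dots> = (\<Sum>c\<in>C. if c = cm then g c else 0)"
  proof (rule sum.cong[OF refl])
    fix c' assume c': "c' \<in> C"
    consider "c' < cm" | "c' = cm" | "cm < c'" by linarith
    then show "g c' * of_nat ((c' + M) choose (cm + M)) = (if c' = cm then g c' else 0)"
    proof cases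
      case 3
      then have "g c' = 0" using c' cm cm_max by (force simp: C'_def)
      then show ?thesis using 3 by simp
    qed simp_all
  qed
  also have "\<dots> = g cm" using cm C by (simp add: C'_def sum.delta')
  finally have "g cm = 0" using deg cm by (auto simp: fps_deg_below_def C'_def)
  then show False using cm by (simp add: C'_def)
qed


subsection \<open>Series built from negative powers of \<open>v\<^sup>1\<^sub>x\<close>\<close>

text \<open>\<open>vx_negative e f\<close>: \<open>f\<close> does not involve \<open>v\<^sup>1\<close>, and on every line in the \<open>v\<^sup>1\<^sub>x\<close>-direction
  it is a combination of \<open>(v\<^sup>1\<^sub>x)\<^sup>-\<^sup>i\<close> with \<open>i \<ge> 1\<close>.\<close>

definition vx_negative :: "'i \<Rightarrow> 'i ser \<Rightarrow> bool" where
  "vx_negative e f \<longleftrightarrow> (\<forall>m. (e,0) \<in># m \<longrightarrow> f m = 0)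
     \<and> (\<forall>r. (e,1) \<notin># r \<longrightarrow> neg_powers (vx_slice e f r))"

lemma vx_negative_v1: "vx_negative e f \<Longrightarrow> (e,0) \<in># m \<Longrightarrow> f m = 0"
  by (simp add: vx_negative_def)

lemma vx_negative_slice: "vx_negative e f \<Longrightarrow> (e,1) \<notin># r \<Longrightarrow> neg_powers (vx_slice e f r)"
  by (simp add: vx_negative_def)

lemma vx_negative_zero: "vx_negative e ser_zero"
proof -
  have "vx_slice e ser_zero r = 0" for r by (simp add: fps_eq_iff ser_zero_def)
  then show ?thesis by (simp add: vx_negative_def neg_powers_zero ser_zero_def)
qed

lemma vx_negative_scale: "vx_negative e f \<Longrightarrow> vx_negative e (\<lambda>m. c * f m)"
  by (simp add: vx_negative_def vx_slice_scale neg_powers_const_mult)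

lemma vx_negative_sum:
  "(\<And>x. x \<in> A \<Longrightarrow> vx_negative e (F x)) \<Longrightarrow> vx_negative e (\<lambda>m. \<Sum>x\<in>A. F x m)"
  by (simp add: vx_negative_def vx_slice_sum neg_powers_sum)

lemma vx_negative_mult:
  assumes f: "vx_negative e f" and h: "vx_negative e h"
  shows "vx_negative e (ser_mult f h)"
  unfolding vx_negative_def
proof (intro conjI allI impI)
  fix m :: "'a mono" assume m: "(e,0) \<in># m"
  have "f a * h (m - a) = 0" if "a \<subseteq># m" for a
  proof (cases "(e,0) \<in># a")
    case False
    then have "(e,0) \<in># m - a" using m by (simp add: in_diff_count not_in_iff)
    then show ?thesis using h by (simp add: vx_negative_v1)
  qed (use f in \<open>simp add: vx_negative_v1\<close>)
  then show "ser_mult f h m = 0" unfolding ser_mult_def by (intro sum.neutral) auto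
next
  fix r :: "'a mono" assume r: "(e,1) \<notin># r"
  have summand: "neg_powers (vx_slice e f r1 * vx_slice e h (r - r1))" if "r1 \<subseteq># r" for r1
  proof -
    have "(e,1) \<notin># r1" using that r by (auto dest: mset_subset_eqD)
    moreover have "(e,1) \<notin># r - r1" using r by (auto dest: in_diffD)
    ultimately show ?thesis using f h by (intro neg_powers_mult) (auto simp: vx_negative_slice)
  qed
  then show "neg_powers (vx_slice e (ser_mult f h) r)"
    unfolding vx_slice_ser_mult[OF r] by (rule neg_powers_sum) (simp add: summand)
qed

lemma vx_negative_deriv:
  assumes f: "vx_negative e f" shows "vx_negative e (ser_deriv x f)"
  unfolding vx_negative_def
proof (intro conjI allI impI)
  fix m :: "'a mono" assume "(e,0) \<in># m"
  then show "ser_deriv x f m = 0" using f by (simp add: ser_deriv_def vx_negative_v1)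
next
  fix r :: "'a mono" assume r: "(e,1) \<notin># r"
  show "neg_powers (vx_slice e (ser_deriv x f) r)"
  proof (cases "x = (e,1)")
    case True
    have "vx_slice e (ser_deriv x f) r = fps_deriv (vx_slice e f r)"
      using True r by (simp add: fps_eq_iff ser_deriv_def not_in_iff algebra_simps)
    then show ?thesis using f r by (simp add: vx_negative_slice neg_powers_deriv)
  next
    case False
    have "vx_slice e (ser_deriv x f) r
        = fps_const (of_nat (count r x + 1)) * vx_slice e f (add_mset x r)"
      using False r by (simp add: fps_eq_iff ser_deriv_def)
    moreover have "(e,1) \<notin># add_mset x r" using False r by simp
    ultimately show ?thesis using f by (simp add: vx_negative_slice neg_powers_const_mult)
  qed
qed

lemma ser_dx_v1_free:
  assumes "ser_deriv (e,0) f = ser_zero"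
  shows "ser_dx e f = (\<lambda>m. \<Sum>x\<in>{x. x \<in># m \<and> 1 \<le> snd x}. ser_deriv (fst x, snd x - 1) f (m - {#x#}))"
  using assms by (simp add: ser_dx_def ser_zero_def fun_eq_iff)

lemma vx_slice_ser_dx:
  assumes v1: "ser_deriv (e,0) f = ser_zero" and r: "(e,1) \<notin># r"
  shows "vx_slice e (ser_dx e f) r
    = (\<Sum>x\<in>{x. x \<in># r \<and> 1 \<le> snd x}. vx_slice e (ser_deriv (fst x, snd x - 1) f) (r - {#x#}))"
proof (rule fps_ext)
  fix k
  define S where "S = {x. x \<in># r + vx_mono e k \<and> 1 \<le> snd x}"
  define R where "R = {x. x \<in># r \<and> 1 \<le> snd x}"
  have fin: "finite S" unfolding S_def by (rule finite_subset[of _ "set_mset (r + vx_mono e k)"]) auto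
  have "R \<subseteq> S" by (auto simp: R_def S_def)
  moreover have "ser_deriv (fst x, snd x - 1) f (r + vx_mono e k - {#x#}) = 0" if "x \<in> S - R" for x
  proof -
    have "x = (e,1)" using that by (auto simp: R_def S_def split: if_splits)
    then show ?thesis using v1 by (simp add: ser_zero_def)
  qed
  moreover have "vx_slice e (ser_dx e f) r $ k
      = (\<Sum>x\<in>S. ser_deriv (fst x, snd x - 1) f (r + vx_mono e k - {#x#}))"
    unfolding vx_slice_nth ser_dx_v1_free[OF v1] S_def by (rule refl)
  ultimately have "vx_slice e (ser_dx e f) r $ k
      = (\<Sum>x\<in>R. ser_deriv (fst x, snd x - 1) f (r + vx_mono e k - {#x#}))"
    using fin by (simp add: sum.mono_neutral_right)
  also have "\<dots> = (\<Sum>x\<in>R. ser_deriv (fst x, snd x - 1) f (r - {#x#} + vx_mono e k))"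
  proof (rule sum.cong[OF refl])
    fix x assume "x \<in> R"
    then have "r + vx_mono e k - {#x#} = r - {#x#} + vx_mono e k"
      by (auto simp: R_def multiset_eq_iff)
    then show "ser_deriv (fst x, snd x - 1) f (r + vx_mono e k - {#x#})
        = ser_deriv (fst x, snd x - 1) f (r - {#x#} + vx_mono e k)" by simp
  qed
  finally show "vx_slice e (ser_dx e f) r $ k
      = (\<Sum>x\<in>{x. x \<in># r \<and> 1 \<le> snd x}. vx_slice e (ser_deriv (fst x, snd x - 1) f) (r - {#x#})) $ k"
    by (simp add: fps_sum_nth R_def)
qed

lemma vx_negative_dx:
  assumes f: "vx_negative e f" shows "vx_negative e (ser_dx e f)"
  unfolding vx_negative_def
proof (intro conjI allI impI)
  have v1: "ser_deriv (e,0) f = ser_zero"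
    using f by (simp add: ser_deriv_def vx_negative_v1 ser_zero_def fun_eq_iff)
  fix m :: "'a mono" assume m: "(e,0) \<in># m"
  have "ser_deriv (fst x, snd x - 1) f (m - {#x#}) = 0" if "x \<in># m" "1 \<le> snd x" for x
  proof -
    have "(e,0) \<in># m - {#x#}" using m that by (auto simp: in_diff_count)
    then show ?thesis using f by (simp add: ser_deriv_def vx_negative_v1)
  qed
  then show "ser_dx e f m = 0" by (simp add: ser_dx_v1_free[OF v1] sum.neutral)
next
  have v1: "ser_deriv (e,0) f = ser_zero"
    using f by (simp add: ser_deriv_def vx_negative_v1 ser_zero_def fun_eq_iff)
  fix r :: "'a mono" assume r: "(e,1) \<notin># r"
  have summand: "neg_powers (vx_slice e (ser_deriv (fst x, snd x - 1) f) (r - {#x#}))"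
    if "x \<in># r" for x
    using r f that by (intro vx_negative_slice vx_negative_deriv) (auto dest: in_diffD)
  show "neg_powers (vx_slice e (ser_dx e f) r)"
    unfolding vx_slice_ser_dx[OF v1 r] by (rule neg_powers_sum) (use summand in auto)
qed

subsection \<open>Differential operators\<close>

definition vx_negative_eser :: "'i \<Rightarrow> 'i eser \<Rightarrow> bool" where
  "vx_negative_eser e F \<longleftrightarrow> ser_const (F 0) \<and> (\<forall>n\<ge>1. vx_negative e (F n))"

lemma vx_negative_eser_sum:
  "(\<And>x. x \<in> A \<Longrightarrow> vx_negative_eser e (F x)) \<Longrightarrow> vx_negative_eser e (\<lambda>n m. \<Sum>x\<in>A. F x n m)"
  by (simp add: vx_negative_eser_def ser_const_sum vx_negative_sum)

lemma vx_negative_eser_scale: "vx_negative_eser e F \<Longrightarrow> vx_negative_eser e (\<lambda>n m. c * F n m)"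
  by (simp add: vx_negative_eser_def ser_const_scale vx_negative_scale)

lemma vx_negative_eser_ezero: "vx_negative_eser e ezero"
  by (simp add: vx_negative_eser_def ezero_def ser_const_def vx_negative_zero[unfolded ser_zero_def])

lemma vx_negative_eser_eone: "vx_negative_eser e eone"
  by (simp add: vx_negative_eser_def eone_def ser_const_one vx_negative_zero)

lemma vx_negative_eser_emult:
  assumes F: "vx_negative_eser e F" and G: "vx_negative_eser e G"
  shows "vx_negative_eser e (emult F G)"
  unfolding vx_negative_eser_def
proof (intro conjI allI impI)
  show "ser_const (emult F G 0)"
    using F G by (simp add: emult_def vx_negative_eser_def ser_const_mult)
next
  fix n :: nat assume n: "1 \<le> n"
  have "vx_negative e (ser_mult (F j) (G (n - j)))" if "j \<in> {..n}" for j
  proof -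
    have "j \<le> n" using that by simp
    then consider "j = 0" | "j = n" | "0 < j" "j < n" by (cases "j = 0"; cases "j = n") auto
    then show ?thesis
    proof cases
      case 1 then show ?thesis using F G n
        by (simp add: vx_negative_eser_def ser_mult_const_left vx_negative_scale)
    next
      case 2 then show ?thesis using F G n
        by (simp add: vx_negative_eser_def ser_mult_const_right vx_negative_scale)
    next
      case 3 then show ?thesis using F G
        by (intro vx_negative_mult) (auto simp: vx_negative_eser_def)
    qed
  qed
  then show "vx_negative e (emult F G n)" unfolding emult_def by (rule vx_negative_sum)
qed

lemma vx_negative_eser_edx_pow: "vx_negative_eser e F \<Longrightarrow> vx_negative_eser e ((edx e ^^ k) F)"
  by (induction k)
    (simp_all add: vx_negative_eser_def edx_def ser_dx_const ser_const_zero vx_negative_dx)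

definition vx_negative_dop :: "'i \<Rightarrow> 'i dop \<Rightarrow> bool" where
  "vx_negative_dop e A \<longleftrightarrow> (\<forall>i. vx_negative_eser e (A i))"

lemma vx_negative_dop_comp:
  assumes "vx_negative_dop e A" and "vx_negative_dop e B"
  shows "vx_negative_dop e (dop_comp e A B)"
  unfolding vx_negative_dop_def dop_comp_def
  using assms by (auto simp: vx_negative_dop_def intro!: vx_negative_eser_sum vx_negative_eser_scale
      vx_negative_eser_emult vx_negative_eser_edx_pow)

lemma vx_negative_dop_mul: "vx_negative_eser e a \<Longrightarrow> vx_negative_dop e (dop_mul a)"
  by (simp add: vx_negative_dop_def dop_mul_def vx_negative_eser_ezero)

lemma vx_negative_dop_D: "vx_negative_dop e dop_D"
  by (simp add: vx_negative_dop_def dop_D_def vx_negative_eser_ezero vx_negative_eser_eone)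

lemma vx_negative_dop_scale: "vx_negative_dop e A \<Longrightarrow> vx_negative_dop e (dop_scale c A)"
  by (simp add: vx_negative_dop_def dop_scale_def escale_def vx_negative_eser_scale)

lemma vx_negative_dop_pow: "vx_negative_dop e A \<Longrightarrow> vx_negative_dop e (dop_pow e A p)"
  unfolding dop_pow_def
  by (induction p) (simp_all add: vx_negative_dop_comp vx_negative_dop_mul vx_negative_eser_eone)

lemma vx_negative_dop_Ksummand:
  assumes "\<And>\<mu> p. vx_negative_eser e (ederiv (\<mu>, p) (w \<alpha>))"
    and "\<And>\<nu> q. vx_negative_eser e (ederiv (\<nu>, q) (w \<beta>))"
  shows "vx_negative_dop e (Ksummand e \<eta> w \<alpha> \<beta> t)"
  using assms unfolding Ksummand_def
  by (cases t) (auto intro!: vx_negative_dop_comp vx_negative_dop_mul vx_negative_dop_pow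
      vx_negative_dop_scale vx_negative_dop_D)

definition eser_vanishes_upto :: "nat \<Rightarrow> 'i eser \<Rightarrow> bool" where
  "eser_vanishes_upto N F \<longleftrightarrow> (\<forall>j\<le>N. F j = ser_zero)"

definition dop_vanishes_upto :: "nat \<Rightarrow> 'i dop \<Rightarrow> bool" where
  "dop_vanishes_upto N A \<longleftrightarrow> (\<forall>i. eser_vanishes_upto N (A i))"

lemma dop_vanishes_upto_comp:
  assumes "dop_vanishes_upto N A \<or> dop_vanishes_upto N B"
  shows "dop_vanishes_upto N (dop_comp e A B)"
proof -
  have "(edx e ^^ k) F j = ser_zero" if "F j = ser_zero" for F :: "'a eser" and k j
    using that by (induction k) (simp_all add: edx_def ser_dx_zero)
  then show ?thesis using assms
    by (auto simp: dop_vanishes_upto_def eser_vanishes_upto_def dop_comp_def emult_def ser_mult_def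
        ser_zero_def fun_eq_iff)
qed

lemma dop_vanishes_upto_Ksummand:
  assumes "eser_vanishes_upto N (ederiv (\<mu>, p) (w \<alpha>)) \<or> eser_vanishes_upto N (ederiv (\<nu>, q) (w \<beta>))"
  shows "dop_vanishes_upto N (Ksummand e \<eta> w \<alpha> \<beta> (p, q, \<mu>, \<nu>))"
proof -
  have "dop_vanishes_upto N (dop_mul a)" if "eser_vanishes_upto N a" for a :: "'a eser"
    using that by (simp add: dop_vanishes_upto_def dop_mul_def eser_vanishes_upto_def ezero_def ser_zero_def)
  then show ?thesis using assms unfolding Ksummand_def prod.case
    by (blast intro: dop_vanishes_upto_comp)
qed

definition dop_order_le :: "nat \<Rightarrow> 'i dop \<Rightarrow> bool" where
  "dop_order_le N A \<longleftrightarrow> (\<forall>j>N. A j = ezero)"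

lemma dop_order_le_comp:
  assumes A: "dop_order_le NA A" and B: "dop_order_le NB B"
  shows "dop_order_le (NA + NB) (dop_comp e A B)"
  unfolding dop_order_le_def
proof (intro allI impI)
  fix i assume i: "NA + NB < i"
  have edx_zero: "(edx e ^^ k) ezero = ezero" for k :: nat
    by (induction k) (simp_all add: edx_def ezero_def ser_dx_zero[unfolded ser_zero_def])
  have "emult (A j) ((edx e ^^ (j - l)) (B (i - l))) = ezero"
    if "A j \<noteq> ezero" "l \<in> {..min j i}" for j l
  proof -
    have "j \<le> NA" using A that(1) by (meson dop_order_le_def leI)
    then have "B (i - l) = ezero" using B i that(2) by (auto simp: dop_order_le_def)
    then have "(edx e ^^ (j - l)) (B (i - l)) = ezero" by (simp add: edx_zero)
    then show ?thesis by (simp add: emult_def ezero_def ser_mult_def fun_eq_iff)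
  qed
  then show "dop_comp e A B i = ezero"
    unfolding dop_comp_def by (simp add: ezero_def fun_eq_iff)
qed

lemma dop_order_le_mul: "dop_order_le 0 (dop_mul a)"
  by (simp add: dop_order_le_def dop_mul_def)

lemma dop_order_le_scale_D: "dop_order_le 1 (dop_scale c dop_D)"
  by (simp add: dop_order_le_def dop_D_def dop_scale_def escale_def ezero_def fun_eq_iff)


text \<open>At \<open>\<epsilon>\<^sup>0\<close> all coefficients are constants, which \<open>\<partial>\<^sub>x\<close> kills, so only the leading
  Leibniz term survives.\<close>

lemma dop_comp_const_term:
  assumes "dop_order_le NA A" and "vx_negative_dop e A" and "vx_negative_dop e B"
  shows "dop_comp e A B i 0 {#} = (\<Sum>j\<le>i. A j 0 {#} * B (i - j) 0 {#})"
proof -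
  let ?J = "{j. A j \<noteq> ezero}"
  have A: "ser_const (A j 0)" and B: "ser_const (B j 0)" for j
    using assms(2,3) by (simp_all add: vx_negative_dop_def vx_negative_eser_def)
  have "?J \<subseteq> {..NA}" using assms(1) by (auto simp: dop_order_le_def not_le[symmetric])
  then have finJ: "finite ?J" by (rule finite_subset) simp
  have inner: "(\<Sum>l\<in>{..min j i}. of_nat (j choose l) * emult (A j) ((edx e ^^ (j - l)) (B (i - l))) 0 {#})
      = (if j \<le> i then A j 0 {#} * B (i - j) 0 {#} else 0)" for j
  proof -
    have "of_nat (j choose l) * emult (A j) ((edx e ^^ (j - l)) (B (i - l))) 0 {#}
        = (if l = j then A j 0 {#} * B (i - j) 0 {#} else 0)" if l: "l \<in> {..min j i}" for l
    proof -
      have "(edx e ^^ k) F 0 = (ser_dx e ^^ k) (F 0)" for k and F :: "'a eser"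
        by (induction k) (simp_all add: edx_def)
      then have "emult (A j) ((edx e ^^ (j - l)) (B (i - l))) 0 {#}
          = A j 0 {#} * (ser_dx e ^^ (j - l)) (B (i - l) 0) {#}"
        using A by (simp add: emult_def ser_mult_const_left)
      then show ?thesis
        using B l by (cases "l = j") (simp_all add: ser_dx_pow_const ser_zero_def)
    qed
    then show ?thesis by (simp add: sum.delta)
  qed
  have "dop_comp e A B i 0 {#} = (\<Sum>j\<in>?J. if j \<le> i then A j 0 {#} * B (i - j) 0 {#} else 0)"
    unfolding dop_comp_def inner by (rule refl)
  also have "\<dots> = (\<Sum>j\<in>?J \<inter> {..i}. A j 0 {#} * B (i - j) 0 {#})"
    by (subst sum.inter_restrict[OF finJ]) simp
  also have "\<dots> = (\<Sum>j\<le>i. A j 0 {#} * B (i - j) 0 {#})"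
  proof (rule sum.mono_neutral_left)
    show "\<forall>j\<in>{..i} - ?J \<inter> {..i}. A j 0 {#} * B (i - j) 0 {#} = 0"
      by (auto simp: ezero_def)
  qed auto
  finally show ?thesis .
qed

lemma sum_delta_convolution:
  fixes i p q :: nat and x y :: "'a::semiring_0"
  shows "(\<Sum>j\<le>i. (if j = p then x else 0) * (if i - j = q then y else 0))
    = (if i = p + q then x * y else 0)"
proof -
  have "(\<Sum>j\<le>i. (if j = p then x else 0) * (if i - j = q then y else 0))
      = (\<Sum>j\<le>i. if j = p then (if i - p = q then x * y else 0) else 0)"
    by (rule sum.cong) auto
  also have "\<dots> = (if i = p + q then x * y else 0)"
    by (subst sum.delta) auto
  finally show ?thesis .
qed

lemma Ksummand_00_const_term:
  assumes a: "vx_negative_eser e a" "a 0 {#} = 1" and b: "vx_negative_eser e b" "b 0 {#} = 1"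
  shows "dop_comp e (dop_comp e (dop_comp e (dop_comp e
        (dop_mul a) (dop_pow e dop_D 0)) (dop_scale c dop_D)) (dop_pow e (dop_scale (-1) dop_D) 0))
        (dop_mul b) i 0 {#} = (if i = 1 then c else 0)"
proof -
  define X1 where "X1 = dop_comp e (dop_mul a) (dop_mul eone)"
  define X2 where "X2 = dop_comp e X1 (dop_scale c dop_D)"
  define X3 where "X3 = dop_comp e X2 (dop_mul eone)"
  have neg: "vx_negative_dop e (dop_mul a)" "vx_negative_dop e (dop_mul b)"
    "vx_negative_dop e (dop_mul eone)" "vx_negative_dop e (dop_scale c dop_D)"
    using a b by (simp_all add: vx_negative_dop_mul vx_negative_eser_eone vx_negative_dop_scale
        vx_negative_dop_D)
  have negX: "vx_negative_dop e X1" "vx_negative_dop e X2" "vx_negative_dop e X3"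
    unfolding X1_def X2_def X3_def
    by (intro vx_negative_dop_comp neg)+
  have ord1: "dop_order_le 0 X1"
    unfolding X1_def using dop_order_le_comp[OF dop_order_le_mul dop_order_le_mul] by simp
  have ord2: "dop_order_le 1 X2"
    unfolding X2_def using dop_order_le_comp[OF ord1 dop_order_le_scale_D] by simp
  have ord3: "dop_order_le 1 X3"
    unfolding X3_def using dop_order_le_comp[OF ord2 dop_order_le_mul] by simp
  have mul: "dop_mul f i 0 {#} = (if i = 0 then f 0 {#} else 0)" for f :: "'a eser" and i
    by (simp add: dop_mul_def ezero_def)
  have scale_D: "dop_scale c dop_D i 0 {#} = (if i = 1 then c else 0)" for i
    by (simp add: dop_scale_def escale_def dop_D_def ezero_def eone_def ser_one_def)
  have one: "eone 0 {#} = 1" by (simp add: eone_def ser_one_def)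
  have X1: "X1 i 0 {#} = (if i = 0 then 1 else 0)" for i
    unfolding X1_def dop_comp_const_term[OF dop_order_le_mul neg(1,3)] mul one a(2)
      sum_delta_convolution by simp
  have X2: "X2 i 0 {#} = (if i = 1 then c else 0)" for i
    unfolding X2_def dop_comp_const_term[OF ord1 negX(1) neg(4)] scale_D X1 sum_delta_convolution
    by simp
  have X3: "X3 i 0 {#} = (if i = 1 then c else 0)" for i
    unfolding X3_def dop_comp_const_term[OF ord2 negX(2) neg(3)] mul one X2 sum_delta_convolution
    by simp
  have "dop_comp e X3 (dop_mul b) i 0 {#} = (if i = 1 then c else 0)"
    unfolding dop_comp_const_term[OF ord3 negX(3) neg(2)] mul b(2) X3 sum_delta_convolution by simp
  then show ?thesis unfolding X1_def X2_def X3_def dop_pow_def funpow_0 .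
qed


subsection \<open>Rational functions of \<open>v\<^sup>1\<^sub>x\<close> and their polynomial parts\<close>

lemma ser_mult_vxpow_on_vx_line:
  assumes P: "Apol_vxfree e d P" and r: "(e,1) \<notin># r"
  shows "ser_mult P (vxpow e i) (r + vx_mono e k) = P r * (of_int (-i) gchoose k)"
proof -
  have dP: "ser_deriv (e,1) P = ser_zero" using P by (simp add: Apol_vxfree_def)
  have "P a * vxpow e i (r + vx_mono e k - a) = 0" if a: "a \<subseteq># r + vx_mono e k" "a \<noteq> r" for a
  proof (cases "(e,1) \<in># a")
    case True then show ?thesis using ser_deriv_zero_vanishes[OF dP] by simp
  next
    case False
    have "a \<subseteq># r" by (rule subset_vx_line_vx_free[OF a(1) False])
    then have "r - a \<noteq> {#}" using a(2) subset_mset.add_diff_inverse by fastforce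
    then obtain x where x: "x \<in># r - a" by (rule multiset_nonemptyE)
    then have "x \<noteq> (e,1)" using r by (auto dest: in_diffD)
    moreover have "x \<in># r + vx_mono e k - a" using x by (simp add: in_diff_count)
    ultimately show ?thesis by (auto simp: vxpow_def)
  qed
  then have "ser_mult P (vxpow e i) (r + vx_mono e k) = P r * vxpow e i (r + vx_mono e k - r)"
    unfolding ser_mult_def by (intro sum_submultisets_single) auto
  then show ?thesis by (simp add: vxpow_def)
qed

text \<open>On a line in the \<open>v\<^sup>1\<^sub>x\<close>-direction only the term \<open>P\<^sub>i/(v\<^sup>1\<^sub>x)\<^sup>i\<close> of matching degree survives.\<close>

lemma rat_rep_on_vx_line:
  assumes rep: "rat_rep e d f m P" and r: "(e,1) \<notin># r"
  shows "f (r + vx_mono e k) = P (int (weight r) - d) r * (of_int (- (int (weight r) - d)) gchoose k)"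
proof -
  define i0 where "i0 = int (weight r) - d"
  have homog: "\<And>i. Apol_vxfree e (d + i) (P i)" using rep by (simp add: rat_rep_def)
  have line: "ser_mult (P i) (vxpow e i) (r + vx_mono e k) = P i r * (of_int (-i) gchoose k)" for i
    by (rule ser_mult_vxpow_on_vx_line[OF homog r])
  have "P i r = 0" if "i \<noteq> i0" for i
    using homog[of i] that by (auto simp: Apol_vxfree_def i0_def)
  then have "lsum (\<lambda>i. ser_mult (P i) (vxpow e i)) (r + vx_mono e k)
      = (\<Sum>i\<in>{i0}. ser_mult (P i) (vxpow e i) (r + vx_mono e k))"
    by (intro lsum_eq_sum) (use line in auto)
  also have "\<dots> = P i0 r * (of_int (- i0) gchoose k)" unfolding line by simp
  finally show ?thesis using rep by (simp add: rat_rep_def i0_def)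
qed

lemma rat_rep_deriv_zero:
  assumes rep: "rat_rep e d f m P" and dP: "\<And>i. ser_deriv x (P i) = ser_zero" and x: "x \<noteq> (e,1)"
  shows "ser_deriv x f = ser_zero"
proof (rule ext)
  fix mo
  let ?M = "add_mset x mo"
  have "ser_mult (P i) (vxpow e i) ?M = 0" for i
  proof -
    have "P i a * vxpow e i (?M - a) = 0" if "a \<subseteq># ?M" for a
    proof (cases "x \<in># a")
      case True then show ?thesis using ser_deriv_zero_vanishes[OF dP] by simp
    next
      case False
      then have "x \<in># ?M - a" by (simp add: in_diff_count not_in_iff)
      then show ?thesis using x by (auto simp: vxpow_def)
    qed
    then show ?thesis unfolding ser_mult_def by (intro sum.neutral) auto
  qed
  then have "f ?M = 0" using rep by (simp add: rat_rep_def lsum_def)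
  then show "ser_deriv x f mo = ser_zero mo" by (simp add: ser_deriv_def ser_zero_def)
qed

text \<open>The polynomial part does not depend on the chosen representation.\<close>

definition polpart_formula :: "'i \<Rightarrow> int \<Rightarrow> 'i ser \<Rightarrow> 'i ser" where
  "polpart_formula e d f mo = (let r = filter_mset (\<lambda>y. y \<noteq> (e,1)) mo; k = count mo (e,1);
     i0 = int (weight r) - d in if i0 \<le> 0 then f r * (of_int (-i0) gchoose k) else 0)"

lemma polpart_sum_eq_formula:
  assumes rep: "rat_rep e d f m P"
  shows "(\<lambda>mo. \<Sum>i\<in>{m..0}. ser_mult (P i) (vxpow e i) mo) = polpart_formula e d f"
proof (rule ext)
  fix mo :: "'a mono"
  define r where "r = filter_mset (\<lambda>y. y \<noteq> (e,1)) mo"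
  define k where "k = count mo (e,1)"
  define i0 where "i0 = int (weight r) - d"
  have mo: "mo = r + vx_mono e k" unfolding r_def k_def by (rule mono_split_vx)
  have r: "(e,1) \<notin># r" by (simp add: r_def)
  have homog: "\<And>i. Apol_vxfree e (d + i) (P i)" using rep by (simp add: rat_rep_def)
  have line: "ser_mult (P i) (vxpow e i) (r + vx_mono e k) = P i r * (of_int (-i) gchoose k)" for i
    by (rule ser_mult_vxpow_on_vx_line[OF homog r])
  have "P i r = 0" if "i \<noteq> i0" for i
    using homog[of i] that by (auto simp: Apol_vxfree_def i0_def)
  then have "(\<Sum>i\<in>{m..0}. ser_mult (P i) (vxpow e i) mo)
      = (\<Sum>i\<in>{m..0}. if i = i0 then P i0 r * (of_int (-i0) gchoose k) else 0)"
    unfolding mo line by (intro sum.cong) auto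
  also have "\<dots> = (if i0 \<in> {m..0} then P i0 r * (of_int (-i0) gchoose k) else 0)"
    by simp
  also have "\<dots> = polpart_formula e d f mo"
  proof -
    have "f r = P i0 r" using rat_rep_on_vx_line[OF rep r, of 0] by (simp add: i0_def)
    moreover have "i0 < m \<Longrightarrow> P i0 r = 0" using rep by (simp add: rat_rep_def ser_zero_def)
    ultimately show ?thesis by (auto simp: polpart_formula_def Let_def r_def k_def i0_def)
  qed
  finally show "(\<Sum>i\<in>{m..0}. ser_mult (P i) (vxpow e i) mo) = polpart_formula e d f mo" .
qed

lemma polpart_eq_formula:
  assumes "rat_rep e d f m P"
  shows "polpart e d f = polpart_formula e d f"
  unfolding polpart_def
proof (rule the_equality)
  show "\<exists>m P. rat_rep e d f m P \<and> polpart_formula e d f = (\<lambda>mo. \<Sum>i\<in>{m..0}. ser_mult (P i) (vxpow e i) mo)"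
    using assms polpart_sum_eq_formula by metis
qed (auto simp: polpart_sum_eq_formula)

text \<open>A rational function without polynomial part that does not involve \<open>v\<^sup>1\<close> is built from
  negative powers of \<open>v\<^sup>1\<^sub>x\<close>: on a line it equals \<open>c (1 + X)\<^sup>-\<^sup>i\<close>, and \<open>i \<le> 0\<close> is excluded
  because that term belongs to the polynomial part.\<close>

lemma vx_negative_if_polpart_zero:
  assumes rep: "rat_rep e d f m P" and pol0: "polpart e d f = ser_zero"
    and v1: "ser_deriv (e,0) f = ser_zero"
  shows "vx_negative e f"
  unfolding vx_negative_def
proof (intro conjI allI impI)
  fix mo :: "'a mono" assume "(e,0) \<in># mo"
  then show "f mo = 0" by (rule ser_deriv_zero_vanishes[OF v1])
next
  fix r :: "'a mono" assume r: "(e,1) \<notin># r"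
  define i0 where "i0 = int (weight r) - d"
  have slice: "vx_slice e f r = fps_const (P i0 r) * fps_binomial (of_int (- i0))"
    by (rule fps_ext) (simp only: vx_slice_nth rat_rep_on_vx_line[OF rep r]
        fps_mult_left_const_nth fps_binomial_nth i0_def)
  show "neg_powers (vx_slice e f r)"
  proof (cases "i0 \<le> 0")
    case True
    have "polpart_formula e d f r = 0" using pol0 polpart_eq_formula[OF rep] by (simp add: ser_zero_def)
    moreover have "filter_mset (\<lambda>y. y \<noteq> (e,1)) r = r" using filter_vx_line[OF r, of 0] by simp
    ultimately have "f r = 0"
      using True r by (simp add: polpart_formula_def Let_def i0_def not_in_iff)
    moreover have "f r = P i0 r" using rat_rep_on_vx_line[OF rep r, of 0] by (simp add: i0_def)
    ultimately show ?thesis using slice by (simp add: neg_powers_zero)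
  next
    case False
    then have "(of_int i0 :: complex) = of_nat (nat i0)" and "1 \<le> nat i0" by simp_all
    then show ?thesis using slice neg_powers_binomial[of "nat i0" "P i0 r"] by simp
  qed
qed


subsection \<open>The operator \<open>K\<close> of a normalised rational Miura transformation\<close>

locale rational_miura_trafo =
  fixes e :: "'i::finite" and w :: "'i \<Rightarrow> 'i eser"
  assumes miura: "rational_miura e w"
begin

lemma w_eps0: "w \<alpha> 0 = ser_var e (\<alpha>, 0)"
  using miura by (simp add: rational_miura_def)

lemma w_rat_rep: "1 \<le> n \<Longrightarrow> \<exists>m P. rat_rep e (int n) (w \<alpha> n) m P \<and> tame_rep P"
  using miura by (simp add: rational_miura_def rat_tame_def)

lemma ederiv_w_eps0: "ederiv x (w \<alpha>) 0 = (\<lambda>m. if m = {#} \<and> x = (\<alpha>,0) then 1 else 0)"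
  by (rule ext) (simp add: ederiv_def w_eps0 ser_deriv_var)

lemma edx_pow_w_eps0: "(edx e ^^ k) (w \<alpha>) 0 = ser_var e (\<alpha>, k)"
  by (induction k) (simp_all add: w_eps0 edx_def ser_dx_var)

text \<open>Tameness: up to any given order in \<open>\<epsilon>\<close>, only finitely many jet variables occur in \<open>w\<^sup>\<alpha>\<close>.\<close>

lemma ederiv_w_vanishes_upto:
  "\<exists>C. \<forall>p>C. \<forall>\<mu>. eser_vanishes_upto n (ederiv (\<mu>, p) (w \<alpha>))"
proof (induction n)
  case 0
  have "eser_vanishes_upto 0 (ederiv (\<mu>, p) (w \<alpha>))" if "0 < p" for p \<mu>
    using that by (simp add: eser_vanishes_upto_def ederiv_w_eps0 ser_zero_def)
  then show ?case by blast
next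
  case (Suc n)
  obtain C1 where C1: "\<forall>p>C1. \<forall>\<mu>. eser_vanishes_upto n (ederiv (\<mu>, p) (w \<alpha>))"
    using Suc by blast
  obtain m P where rep: "rat_rep e (int (Suc n)) (w \<alpha> (Suc n)) m P" and "tame_rep P"
    using w_rat_rep[of "Suc n" \<alpha>] by auto
  then obtain C2 where C2: "\<forall>i \<alpha>' k. k > C2 \<longrightarrow> ser_deriv (\<alpha>',k) (P i) = ser_zero"
    by (auto simp: tame_rep_def)
  have "eser_vanishes_upto (Suc n) (ederiv (\<mu>, p) (w \<alpha>))" if p: "p > max C1 (max C2 1)" for p \<mu>
  proof -
    have "ser_deriv (\<mu>, p) (w \<alpha> (Suc n)) = ser_zero"
      using p C2 by (intro rat_rep_deriv_zero[OF rep]) auto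
    then show ?thesis using C1 p by (auto simp: eser_vanishes_upto_def ederiv_def le_Suc_eq)
  qed
  then show ?case by blast
qed

end

locale normalized_miura = rational_miura_trafo e w for e :: "'i::finite" and w +
  assumes pol: "\<forall>\<alpha> n. polpart e (int n) (w \<alpha> n) = (if n = 0 then ser_var e (\<alpha>, 0) else ser_zero)"
    and dv1: "\<forall>\<alpha>. ederiv (e, 0) (w \<alpha>) = (if \<alpha> = e then eone else ezero)"
begin

lemma w_vx_negative:
  assumes "1 \<le> n" shows "vx_negative e (w \<alpha> n)"
proof -
  obtain m P where rep: "rat_rep e (int n) (w \<alpha> n) m P" using w_rat_rep[OF assms] by blast
  have "polpart e (int n) (w \<alpha> n) = ser_zero" using pol assms by simp
  moreover have "ser_deriv (e,0) (w \<alpha> n) = ser_zero"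
    using dv1 assms by (simp add: ederiv_def fun_eq_iff eone_def ezero_def ser_zero_def)
  ultimately show ?thesis by (rule vx_negative_if_polpart_zero[OF rep])
qed

lemma vx_negative_eser_ederiv_w: "vx_negative_eser e (ederiv x (w \<alpha>))"
  unfolding vx_negative_eser_def
proof (intro conjI allI impI)
  show "ser_const (ederiv x (w \<alpha>) 0)" by (simp add: ederiv_w_eps0 ser_const_def)
  fix n :: nat assume "1 \<le> n"
  then show "vx_negative e (ederiv x (w \<alpha>) n)"
    by (simp add: ederiv_def vx_negative_deriv w_vx_negative)
qed

lemma vx_negative_dop_Ksummand_w: "vx_negative_dop e (Ksummand e \<eta> w \<alpha> \<beta> t)"
  by (intro vx_negative_dop_Ksummand vx_negative_eser_ederiv_w)

text \<open>At \<open>\<epsilon>\<^sup>0\<close> only the summand \<open>p = q = 0\<close>, \<open>\<mu> = \<alpha>\<close>, \<open>\<nu> = \<beta>\<close> survives.\<close>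

lemma Kop_eps0: "Kop e \<eta> w \<alpha> \<beta> i 0 = (\<lambda>m. if m = {#} \<and> i = 1 then \<eta> \<alpha> \<beta> else 0)"
proof (rule ext)
  fix m
  let ?t0 = "(0::nat, 0::nat, \<alpha>, \<beta>)"
  have "Ksummand e \<eta> w \<alpha> \<beta> t i 0 m = 0" if "t \<noteq> ?t0" for t
  proof -
    obtain p q \<mu> \<nu> where t: "t = (p, q, \<mu>, \<nu>)" by (cases t) auto
    have "(\<mu>, p) \<noteq> (\<alpha>, 0) \<or> (\<nu>, q) \<noteq> (\<beta>, 0)" using that t by auto
    then have "eser_vanishes_upto 0 (ederiv (\<mu>, p) (w \<alpha>)) \<or> eser_vanishes_upto 0 (ederiv (\<nu>, q) (w \<beta>))"
      by (auto simp: eser_vanishes_upto_def ederiv_w_eps0 ser_zero_def)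
    then have "dop_vanishes_upto 0 (Ksummand e \<eta> w \<alpha> \<beta> (p, q, \<mu>, \<nu>))"
      by (rule dop_vanishes_upto_Ksummand)
    then show ?thesis using t by (simp add: dop_vanishes_upto_def eser_vanishes_upto_def ser_zero_def)
  qed
  then have "Kop e \<eta> w \<alpha> \<beta> i 0 m = Ksummand e \<eta> w \<alpha> \<beta> ?t0 i 0 m"
    unfolding Kop_def by (subst lsum_eq_sum[where T = "{?t0}"]) auto
  also have "\<dots> = (if m = {#} \<and> i = 1 then \<eta> \<alpha> \<beta> else 0)"
  proof (cases "m = {#}")
    case True
    have "ederiv (\<alpha>, 0) (w \<alpha>) 0 {#} = 1" "ederiv (\<beta>, 0) (w \<beta>) 0 {#} = 1"
      by (simp_all add: ederiv_w_eps0)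
    then show ?thesis using True unfolding Ksummand_def prod.case
      by (simp add: Ksummand_00_const_term vx_negative_eser_ederiv_w)
  next
    case False
    then show ?thesis using vx_negative_dop_Ksummand_w
      by (simp add: vx_negative_dop_def vx_negative_eser_def ser_const_def)
  qed
  finally show "Kop e \<eta> w \<alpha> \<beta> i 0 m = (if m = {#} \<and> i = 1 then \<eta> \<alpha> \<beta> else 0)" .
qed

text \<open>At a fixed order \<open>\<epsilon>\<^sup>n\<close> tameness makes the sum defining \<open>K\<close> finite.\<close>

lemma Kop_vx_negative:
  assumes "1 \<le> n" shows "vx_negative e (Kop e \<eta> w \<alpha> \<beta> i n)"
proof -
  obtain C1 where C1: "\<forall>p>C1. \<forall>\<mu>. eser_vanishes_upto n (ederiv (\<mu>, p) (w \<alpha>))"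
    using ederiv_w_vanishes_upto by blast
  obtain C2 where C2: "\<forall>p>C2. \<forall>\<mu>. eser_vanishes_upto n (ederiv (\<mu>, p) (w \<beta>))"
    using ederiv_w_vanishes_upto by blast
  define T where "T = {..max C1 C2} \<times> {..max C1 C2} \<times> (UNIV :: 'i set) \<times> (UNIV :: 'i set)"
  have "Ksummand e \<eta> w \<alpha> \<beta> t i n m = 0" if "t \<notin> T" for t m
  proof -
    obtain p q \<mu> \<nu> where t: "t = (p, q, \<mu>, \<nu>)" by (cases t) auto
    have "p > max C1 C2 \<or> q > max C1 C2" using that t by (auto simp: T_def)
    then have "eser_vanishes_upto n (ederiv (\<mu>, p) (w \<alpha>)) \<or> eser_vanishes_upto n (ederiv (\<nu>, q) (w \<beta>))"
      using C1 C2 by auto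
    then have "dop_vanishes_upto n (Ksummand e \<eta> w \<alpha> \<beta> (p, q, \<mu>, \<nu>))"
      by (rule dop_vanishes_upto_Ksummand)
    then show ?thesis using t by (simp add: dop_vanishes_upto_def eser_vanishes_upto_def ser_zero_def)
  qed
  then have "Kop e \<eta> w \<alpha> \<beta> i n = (\<lambda>m. \<Sum>t\<in>T. Ksummand e \<eta> w \<alpha> \<beta> t i n m)"
    unfolding Kop_def by (intro ext lsum_eq_sum) (auto simp: T_def)
  moreover have "vx_negative e (Ksummand e \<eta> w \<alpha> \<beta> t i n)" for t
    using vx_negative_dop_Ksummand_w assms by (simp add: vx_negative_dop_def vx_negative_eser_def)
  ultimately show ?thesis by (simp add: vx_negative_sum)
qed

end


subsection \<open>Power series in the variables \<open>w\<close>\<close>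

text \<open>The monomial \<open>\<Prod>v\<^sup>\<alpha>\<^sub>k\<close> with exponents \<open>\<mu>\<close>, expanded in the shifted variables: only
  \<open>v\<^sup>1\<^sub>x = 1 + u\<^sup>1\<^sub>1\<close> is shifted, which produces the binomial coefficient.\<close>

definition vmono :: "'i \<Rightarrow> 'i mono \<Rightarrow> 'i ser" where
  "vmono e \<mu> m = (if filter_mset (\<lambda>y. y \<noteq> (e,1)) \<mu> = filter_mset (\<lambda>y. y \<noteq> (e,1)) m
     then of_nat (count \<mu> (e,1) choose count m (e,1)) else 0)"

lemma vmono_add_mset:
  "vmono e (add_mset x \<mu>) m
    = (if x \<in># m then vmono e \<mu> (m - {#x#}) else 0) + (if x = (e,1) then vmono e \<mu> m else 0)"
proof (cases "x = (e,1)")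
  case False
  let ?f = "filter_mset (\<lambda>y. y \<noteq> (e,1))"
  have f: "?f (add_mset x \<mu>) = add_mset x (?f \<mu>)" using False by simp
  show ?thesis
  proof (cases "x \<in># m")
    case True
    have fm: "?f (m - {#x#}) = ?f m - {#x#}" using False by (auto simp: multiset_eq_iff)
    have "x \<in># ?f m" using True False by simp
    then have "add_mset x (?f \<mu>) = ?f m \<longleftrightarrow> ?f \<mu> = ?f m - {#x#}"
      by (metis add_mset_remove_trivial insert_DiffM)
    then show ?thesis using True False by (simp add: vmono_def f fm)
  next
    case nm: False
    then have "x \<notin># ?f m" by simp
    then have "add_mset x (?f \<mu>) \<noteq> ?f m" by (metis union_single_eq_member)
    then show ?thesis using nm False by (simp add: vmono_def f)
  qed
next
  case True
  have f: "filter_mset (\<lambda>y. y \<noteq> (e,1)) (add_mset x \<mu>) = filter_mset (\<lambda>y. y \<noteq> (e,1)) \<mu>"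
    using True by simp
  show ?thesis
  proof (cases "x \<in># m")
    case xm: True
    have fm: "filter_mset (\<lambda>y. y \<noteq> (e,1)) (m - {#x#}) = filter_mset (\<lambda>y. y \<noteq> (e,1)) m"
      using True by (auto simp: multiset_eq_iff)
    obtain k where k: "count m (e,1) = Suc k"
      using xm True by (metis count_greater_zero_iff gr0_implies_Suc)
    then show ?thesis using xm True by (simp add: vmono_def f fm)
  next
    case False
    then have "count m (e,1) = 0" using True by (simp add: not_in_iff)
    then show ?thesis using False True by (simp add: vmono_def f)
  qed
qed

lemma vmono_on_vx_line:
  assumes "(e,1) \<notin># r"
  shows "vmono e (r + vx_mono e c) (r + vx_mono e k) = of_nat (c choose k)"
proof -
  have "count (r + vx_mono e c) (e,1) = c" for c using assms by (simp add: not_in_iff)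
  then show ?thesis unfolding vmono_def filter_vx_line[OF assms] by simp
qed

lemma emono_empty: "emono e w {#} = eone"
  by (simp add: emono_def emprod_def)

context rational_miura_trafo
begin

lemma emprod_eps0: "emprod e w xs 0 = vmono e (mset xs)"
proof (induction xs)
  case Nil
  show ?case
  proof (rule ext)
    fix m :: "'i mono"
    have "filter_mset (\<lambda>y. y \<noteq> (e,1)) m = {#} \<and> count m (e,1) = 0 \<longleftrightarrow> m = {#}"
      by (auto simp: multiset_eq_iff) (metis count_filter_mset)
    then show "emprod e w [] 0 m = vmono e (mset []) m"
      by (auto simp: emprod_def eone_def ser_one_def vmono_def)
  qed
next
  case (Cons x xs)
  show ?case
  proof (rule ext)
    fix m
    have "emprod e w (x # xs) 0 m = ser_mult ((edx e ^^ snd x) (w (fst x)) 0) (emprod e w xs 0) m"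
      by (simp add: emprod_def emult_def)
    also have "\<dots> = ser_mult (ser_var e x) (vmono e (mset xs)) m"
      using Cons by (simp add: edx_pow_w_eps0)
    also have "\<dots> = vmono e (mset (x # xs)) m"
      by (simp add: ser_mult_var vmono_add_mset)
    finally show "emprod e w (x # xs) 0 m = vmono e (mset (x # xs)) m" .
  qed
qed

lemma emono_eps0: "emono e w \<mu> 0 = vmono e \<mu>"
proof -
  have "mset (SOME xs. mset xs = \<mu>) = \<mu>" by (rule someI_ex) (rule ex_mset)
  then show ?thesis unfolding emono_def using emprod_eps0 by metis
qed

text \<open>If a re-expression \<open>G\<close> is trivial below order \<open>\<epsilon>\<^sup>n\<close>, then at order \<open>\<epsilon>\<^sup>n\<close> only \<open>G\<^sub>n\<close>
  contributes, evaluated at \<open>w = v\<close>.\<close>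

lemma reexpression_coeff:
  assumes K: "K = (\<lambda>n m. \<Sum>(j, \<mu>)\<in>subst_terms e w G n m. G j \<mu> * emono e w \<mu> (n - j) m)"
    and below: "\<forall>j<n. \<forall>\<mu>. (j = 0 \<and> \<mu> = {#}) \<or> G j \<mu> = 0"
  shows "K n m = (\<Sum>\<mu>\<in>{\<mu>. G n \<mu> * vmono e \<mu> m \<noteq> 0}. G n \<mu> * vmono e \<mu> m)"
proof -
  let ?A = "{\<mu>. G n \<mu> * vmono e \<mu> m \<noteq> 0}"
  have top: "j = n" if "(j, \<mu>) \<in> subst_terms e w G n m" for j \<mu>
  proof (rule ccontr)
    assume "j \<noteq> n"
    then have "j < n" using that by (simp add: subst_terms_def)
    moreover have nz: "G j \<mu> * emono e w \<mu> (n - j) m \<noteq> 0" using that by (simp add: subst_terms_def)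
    ultimately have "j = 0" "\<mu> = {#}" using below by auto
    then have "emono e w \<mu> (n - j) m = 0"
      using \<open>j < n\<close> by (simp add: emono_empty eone_def ser_zero_def)
    then show False using nz by simp
  qed
  have "subst_terms e w G n m = Pair n ` ?A"
  proof
    show "subst_terms e w G n m \<subseteq> Pair n ` ?A"
    proof clarify
      fix j \<mu> assume j\<mu>: "(j, \<mu>) \<in> subst_terms e w G n m"
      then have "j = n" by (rule top)
      then show "(j, \<mu>) \<in> Pair n ` ?A" using j\<mu> by (auto simp: subst_terms_def emono_eps0)
    qed
  qed (auto simp: subst_terms_def emono_eps0)
  then show ?thesis
    by (simp add: K sum.reindex inj_on_def emono_eps0)
qed

end

lemma finite_vx_line_support:
  assumes fin: "finite {filter_mset (\<lambda>x. snd x > 0) \<mu> | \<mu>. Gn \<mu> \<noteq> 0}" and r: "(e,1) \<notin># r"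
  shows "finite {c. Gn (r + vx_mono e c) \<noteq> 0}"
proof -
  define f where "f c = filter_mset (\<lambda>x. snd x > 0) (r + vx_mono e c)" for c
  have "inj f"
  proof
    fix c c' assume "f c = f c'"
    then have "count (f c) (e,1) = count (f c') (e,1)" by simp
    then show "c = c'" using r by (simp add: f_def not_in_iff)
  qed
  moreover have "f ` {c. Gn (r + vx_mono e c) \<noteq> 0} \<subseteq> {filter_mset (\<lambda>x. snd x > 0) \<mu> | \<mu>. Gn \<mu> \<noteq> 0}"
    unfolding f_def by blast
  ultimately show ?thesis
    using finite_subset[OF _ fin] finite_imageD inj_on_subset[of f UNIV] by blast
qed

text \<open>Along a line in the \<open>v\<^sup>1\<^sub>x\<close>-direction a series of \<open>v\<close>-monomials is a polynomial in
  \<open>v\<^sup>1\<^sub>x = 1 + X\<close>, because the underlying series is polynomial in the \<open>v\<^sub>k\<close> with \<open>k > 0\<close>.\<close>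

lemma vx_slice_vmono_combination:
  fixes Gn :: "'i ser" and Kn :: "'i ser"
  assumes fin: "finite {filter_mset (\<lambda>x. snd x > 0) \<mu> | \<mu>. Gn \<mu> \<noteq> 0}"
    and K: "\<And>m. Kn m = (\<Sum>\<mu>\<in>{\<mu>. Gn \<mu> * vmono e \<mu> m \<noteq> 0}. Gn \<mu> * vmono e \<mu> m)"
    and r: "(e,1) \<notin># r"
  shows "vx_slice e Kn r = (\<Sum>c\<in>{c. Gn (r + vx_mono e c) \<noteq> 0}. fps_const (Gn (r + vx_mono e c)) * (1 + fps_X) ^ c)"
proof -
  define C where "C = {c. Gn (r + vx_mono e c) \<noteq> 0}"
  have finC: "finite C" unfolding C_def by (rule finite_vx_line_support[OF fin r])
  show "vx_slice e Kn r = (\<Sum>c\<in>{c. Gn (r + vx_mono e c) \<noteq> 0}. fps_const (Gn (r + vx_mono e c)) * (1 + fps_X) ^ c)"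
  proof (rule fps_ext)
    fix k
    define g where "g \<mu> = Gn \<mu> * vmono e \<mu> (r + vx_mono e k)" for \<mu>
    have sub: "{\<mu>. g \<mu> \<noteq> 0} \<subseteq> (\<lambda>c. r + vx_mono e c) ` C"
    proof
      fix \<mu> assume "\<mu> \<in> {\<mu>. g \<mu> \<noteq> 0}"
      then have G: "Gn \<mu> \<noteq> 0" and "vmono e \<mu> (r + vx_mono e k) \<noteq> 0" by (auto simp: g_def)
      then have "filter_mset (\<lambda>y. y \<noteq> (e,1)) \<mu> = r"
        unfolding vmono_def by (metis filter_vx_line[OF r])
      then have mu: "\<mu> = r + vx_mono e (count \<mu> (e,1))" using mono_split_vx[of \<mu> e] by simp
      then show "\<mu> \<in> (\<lambda>c. r + vx_mono e c) ` C" using G by (auto simp: C_def)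
    qed
    have inj: "inj_on (\<lambda>c. r + vx_mono e c) C"
      by (rule inj_onI) (metis add_left_cancel count_replicate_mset)
    have "vx_slice e Kn r $ k = (\<Sum>\<mu>\<in>{\<mu>. g \<mu> \<noteq> 0}. g \<mu>)"
      by (simp add: K g_def)
    also have "\<dots> = (\<Sum>\<mu>\<in>(\<lambda>c. r + vx_mono e c) ` C. g \<mu>)"
      using sub finC by (intro sum.mono_neutral_left) (auto simp: C_def)
    also have "\<dots> = (\<Sum>c\<in>C. g (r + vx_mono e c))"
      by (rule sum.reindex[OF inj, unfolded comp_def])
    also have "\<dots> = (\<Sum>c\<in>C. Gn (r + vx_mono e c) * of_nat (c choose k))"
      by (simp only: g_def vmono_on_vx_line[OF r])
    also have "\<dots> = (\<Sum>c\<in>C. fps_const (Gn (r + vx_mono e c)) * (1 + fps_X) ^ c) $ k"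
      by (simp add: fps_sum_nth one_plus_X_power_nth)
    finally show "vx_slice e Kn r $ k
        = (\<Sum>c\<in>{c. Gn (r + vx_mono e c) \<noteq> 0}. fps_const (Gn (r + vx_mono e c)) * (1 + fps_X) ^ c) $ k"
      by (simp add: C_def)
  qed
qed

lemma vmono_combination_coeff_eq_0:
  assumes fin: "finite {filter_mset (\<lambda>x. snd x > 0) \<mu> | \<mu>. Gn \<mu> \<noteq> 0}"
    and K: "\<And>m. Kn m = (\<Sum>\<mu>\<in>{\<mu>. Gn \<mu> * vmono e \<mu> m \<noteq> 0}. Gn \<mu> * vmono e \<mu> m)"
    and r: "(e,1) \<notin># r"
    and deg: "fps_deg_below (vx_slice e Kn r * (1 + fps_X) ^ M) (M + b)" and "b \<le> c"
  shows "Gn (r + vx_mono e c) = 0"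
proof (rule ccontr)
  assume "Gn (r + vx_mono e c) \<noteq> 0"
  then show False
    using one_plus_X_combination_coeff_eq_0[of "{c. Gn (r + vx_mono e c) \<noteq> 0}" "\<lambda>c. Gn (r + vx_mono e c)"]
      finite_vx_line_support[OF fin r] vx_slice_vmono_combination[OF fin K r] deg \<open>b \<le> c\<close>
    by auto
qed


context normalized_miura
begin

text \<open>Along every line the \<open>\<epsilon>\<^sup>n\<close>-coefficient of \<open>K\<^sub>i\<close> is a polynomial in \<open>v\<^sup>1\<^sub>x\<close>: of degree \<open>0\<close>
  for \<open>n = 0\<close>, and for \<open>n \<ge> 1\<close> also a combination of negative powers.\<close>

lemma Kop_reexpression_trivial:
  assumes G: "in_Ahat G"
    and K: "Kop e \<eta> w \<alpha> \<beta> i = (\<lambda>n m. \<Sum>(j, \<mu>)\<in>subst_terms e w G n m. G j \<mu> * emono e w \<mu> (n - j) m)"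
  shows "(n = 0 \<and> \<mu> = {#}) \<or> G n \<mu> = 0"
proof (induction n arbitrary: \<mu> rule: less_induct)
  case (less n)
  let ?K = "Kop e \<eta> w \<alpha> \<beta> i n"
  have fin: "finite {filter_mset (\<lambda>x. snd x > 0) \<mu> | \<mu>. G n \<mu> \<noteq> 0}"
    using G by (simp add: in_Ahat_def)
  have Kn: "?K m = (\<Sum>\<mu>\<in>{\<mu>. G n \<mu> * vmono e \<mu> m \<noteq> 0}. G n \<mu> * vmono e \<mu> m)" for m
    using reexpression_coeff[OF K] less.IH by blast
  define r where "r = filter_mset (\<lambda>y. y \<noteq> (e,1)) \<mu>"
  define c where "c = count \<mu> (e,1)"
  have \<mu>: "\<mu> = r + vx_mono e c" unfolding r_def c_def by (rule mono_split_vx)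
  have r: "(e,1) \<notin># r" by (simp add: r_def)
  show ?case
  proof (cases "n = 0")
    case True
    define b where "b = (if r = {#} then 1 else (0::nat))"
    have deg: "fps_deg_below (vx_slice e ?K r * (1 + fps_X) ^ 0) (0 + b)"
      using True by (auto simp: fps_deg_below_def b_def Kop_eps0)
    show ?thesis
    proof (cases "\<mu> = {#}")
      case False
      then have "b \<le> c" using \<mu> by (auto simp: b_def)
      then show ?thesis using vmono_combination_coeff_eq_0[OF fin Kn r deg] \<mu> by simp
    qed (simp add: True)
  next
    case False
    then have "neg_powers (vx_slice e ?K r)" by (intro vx_negative_slice[OF Kop_vx_negative r]) simp
    then obtain M where "neg_powers_at (vx_slice e ?K r) M" by (auto simp: neg_powers_def)
    then have "G n (r + vx_mono e c) = 0"
      by (intro vmono_combination_coeff_eq_0[OF fin Kn r, where M = M and b = 0])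
        (simp_all add: neg_powers_at_def)
    then show ?thesis using \<mu> by simp
  qed
qed

lemma Kop_eps_pos:
  assumes "expressible_in_w e w (Kop e \<eta> w \<alpha> \<beta> i)" and "1 \<le> n"
  shows "Kop e \<eta> w \<alpha> \<beta> i n m = 0"
proof -
  obtain G where G: "in_Ahat G"
    and K: "Kop e \<eta> w \<alpha> \<beta> i = (\<lambda>n m. \<Sum>(j, \<mu>)\<in>subst_terms e w G n m. G j \<mu> * emono e w \<mu> (n - j) m)"
    using assms(1) by (auto simp: expressible_in_w_def)
  have triv: "(j = 0 \<and> \<mu> = {#}) \<or> G j \<mu> = 0" for j \<mu> by (rule Kop_reexpression_trivial[OF G K])
  then have "G n \<mu> = 0" for \<mu> using assms(2) by (metis not_one_le_zero)
  then show ?thesis using reexpression_coeff[OF K, of n m] triv by simp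
qed

end

theorem lemma7p3:
  fixes \<eta> :: "'i::finite \<Rightarrow> 'i \<Rightarrow> complex" and e :: 'i and w :: "'i \<Rightarrow> 'i eser"
  assumes sym: "\<forall>a b. \<eta> a b = \<eta> b a"
    and nondeg: "\<forall>x. (\<forall>b. (\<Sum>a\<in>UNIV. x a * \<eta> a b) = 0) \<longrightarrow> (\<forall>a. x a = 0)"
    and miura: "rational_miura e w"
    and pol: "\<forall>\<alpha> n. polpart e (int n) (w \<alpha> n) = (if n = 0 then ser_var e (\<alpha>, 0) else ser_zero)"
    and dv1: "\<forall>\<alpha>. ederiv (e, 0) (w \<alpha>) = (if \<alpha> = e then eone else ezero)"
    and reexp: "\<forall>\<alpha> \<beta> i. expressible_in_w e w (Kop e \<eta> w \<alpha> \<beta> i)"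
  shows "\<forall>\<alpha> \<beta> i. Kop e \<eta> w \<alpha> \<beta> i = (if i = 1 then econst (\<eta> \<alpha> \<beta>) else ezero)"
proof (intro allI ext)
  fix \<alpha> \<beta> i n m
  interpret normalized_miura e w
    using miura pol dv1 by unfold_locales
  show "Kop e \<eta> w \<alpha> \<beta> i n m = (if i = 1 then econst (\<eta> \<alpha> \<beta>) else ezero) n m"
  proof (cases "n = 0")
    case True
    then show ?thesis by (simp add: Kop_eps0 econst_def ezero_def)
  next
    case False
    then show ?thesis using reexp by (simp add: Kop_eps_pos econst_def ezero_def)
  qed
qed

end
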